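(* Let $n\in\mathbb{N}$, $\hbar\in{]0,\infty[}$ and $k\in\mathbb{N}_0$. Then the $^*$-ideal $\operatorname{supp}_{\mathbb C}\mathcal{R}_{\hbar,\hbar k}$ of $\mathcal{B}_\hbar$ is the $^*$-ideal of $\mathcal{B}_\hbar$ generated by $\{\mathcal{J}-\hbar k\mathbb{1}\}\cup\mathscr{P}^{k+1,k+1}(\mathbb{C}^{1+n})$.
   Context: $\mathscr{P}^{k,\ell}(\mathbb{C}^{1+n})$ is the span of $z^K\overline{z}^L$ ($K,L\in\mathbb{N}_0^{1+n}$, $|K|=k$, $|L|=\ell$). Wick product: $f\star_\hbar g=\sum_K\frac{\hbar^{|K|}}{K!}\frac{\partial^{|K|}f}{\partial\overline{z}^K}\frac{\partial^{|K|}g}{\partial z^K}$, involution pointwise complex conjugation. $\mathcal{J}=\sum_jz_j\overline{z_j}$. $\mathcal{B}_\hbar=\bigoplus_m\mathscr{P}^{m,m}(\mathbb{C}^{1+n})$ with $\star_\hbar$. Fock space: $\bigoplus_m\mathscr{P}^{m,0}(\mathbb{C}^{1+n})$ with $\langle z^K,z^L\rangle_\hbar=\delta_{K,L}\hbar^{|K|}K!$, $\pi_\hbar(z^K\overline{z}^L)=z^K\hbar^{|L|}\partial^{|L|}/\partial z^L$. Positive cone of $\mathcal{B}_\hbar$: Hermitian $f$ with $\langle g,\pi_\hbar(f)g\rangle_\hbar\ge0$ for all $g$. A state is a linear $\omega$ with $\omega(\mathbb{1})=1$, real on Hermitian, $\ge0$ on the positive cone. $\mathcal{R}_{\hbar,\mu}$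 = Hermitian $f\in\mathcal{B}_\hbar$ with $\omega(f)\ge0$ for all states with $\omega((\mathcal{J}-\mu\mathbb{1})\star_\hbar(\mathcal{J}-\mu\mathbb{1}))=0$. For a quadratic module $Q$, $\operatorname{supp}_{\mathbb C}Q=(Q\cap-Q)+\mathrm{i}(Q\cap-Q)$. *)

theory Defs
  imports Complex_Main
begin

text \<open>Polynomials in z and zbar on C^(1+n), with the index set {0..n} rendered as a
finite type 'i (CARD('i) = 1+n). Multi-indices are functions 'i => nat; a polynomial
is given by its coefficient function on pairs of multi-indices (K,L) (coefficient of
z^K zbar^L), required to have finite support.\<close>

type_synonym 'i mon = "('i \<Rightarrow> nat) \<times> ('i \<Rightarrow> nat)"
type_synonym 'i cpoly = "'i mon \<Rightarrow> complex"
type_synonym 'i fock = "('i \<Rightarrow> nat) \<Rightarrow> complex"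

definition csupp :: "('a \<Rightarrow> complex) \<Rightarrow> 'a set" where
  "csupp f = {m. f m \<noteq> 0}"

definition deg :: "('i::finite \<Rightarrow> nat) \<Rightarrow> nat" where
  "deg K = (\<Sum>j\<in>UNIV. K j)"

definition mfact :: "('i::finite \<Rightarrow> nat) \<Rightarrow> real" where
  "mfact K = (\<Prod>j\<in>UNIV. fact (K j))"

text \<open>Wick product: sum over M of h^|M|/M! (d^M f / d zbar^M)(d^M g / d z^M),
written on coefficients.\<close>
definition wick :: "real \<Rightarrow> 'i::finite cpoly \<Rightarrow> 'i cpoly \<Rightarrow> 'i cpoly" where
  "wick h f g = (\<lambda>(A, B).
     \<Sum>(K, L)\<in>csupp f. \<Sum>(K', L')\<in>csupp g. \<Sum>M\<in>{M. M \<le> L \<and> M \<le> K'}.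
       if (\<lambda>j. K j + K' j - M j) = A \<and> (\<lambda>j. L j - M j + L' j) = B
       then complex_of_real (h ^ deg M / mfact M
              * (mfact L / mfact (\<lambda>j. L j - M j))
              * (mfact K' / mfact (\<lambda>j. K' j - M j))) * f (K, L) * g (K', L')
       else 0)"

text \<open>Involution: pointwise complex conjugation of the function, i.e. on coefficients
the coefficient of z^K zbar^L of f^* is the conjugate of that of z^L zbar^K of f.\<close>
definition cstar :: "'i cpoly \<Rightarrow> 'i cpoly" where
  "cstar f = (\<lambda>(K, L). cnj (f (L, K)))"

definition Balg :: "'i::finite cpoly set" where
  "Balg = {f. finite (csupp f) \<and> (\<forall>(K, L)\<in>csupp f. deg K = deg L)}"

definition one_p :: "'i::finite cpoly" where
  "one_p = (\<lambda>(K, L). if K = (\<lambda>_. 0) \<and> L = (\<lambda>_. 0) then 1 else 0)"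

definition J_p :: "'i::finite cpoly" where
  "J_p = (\<lambda>(K, L). if K = L \<and> deg K = 1 then 1 else 0)"

definition Pkl :: "nat \<Rightarrow> nat \<Rightarrow> 'i::finite cpoly set" where
  "Pkl k l = {f. finite (csupp f) \<and> (\<forall>(K, L)\<in>csupp f. deg K = k \<and> deg L = l)}"

text \<open>Fock space: finitely supported polynomials in z. Inner product
<z^K, z^L> = delta_{K,L} h^|K| K!, antilinear in the first argument.\<close>
definition fock_inner :: "real \<Rightarrow> 'i::finite fock \<Rightarrow> 'i fock \<Rightarrow> complex" where
  "fock_inner h g1 g2 =
     (\<Sum>K\<in>csupp g1 \<inter> csupp g2. cnj (g1 K) * g2 K * complex_of_real (h ^ deg K * mfact K))"

text \<open>pi_h(z^K zbar^L) = z^K h^|L| d^|L|/dz^L.\<close>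
definition pi_rep :: "real \<Rightarrow> 'i::finite cpoly \<Rightarrow> 'i fock \<Rightarrow> 'i fock" where
  "pi_rep h f g = (\<lambda>A.
     \<Sum>(K, L)\<in>csupp f. \<Sum>M\<in>csupp g.
       if L \<le> M \<and> (\<lambda>j. K j + (M j - L j)) = A
       then f (K, L) * g M * complex_of_real (h ^ deg L * (mfact M / mfact (\<lambda>j. M j - L j)))
       else 0)"

definition pos_cone :: "real \<Rightarrow> 'i::finite cpoly set" where
  "pos_cone h = {f \<in> Balg. cstar f = f \<and>
     (\<forall>g. finite (csupp g) \<longrightarrow>
        Im (fock_inner h g (pi_rep h f g)) = 0 \<and> 0 \<le> Re (fock_inner h g (pi_rep h f g)))}"

definition is_state :: "real \<Rightarrow> ('i::finite cpoly \<Rightarrow> complex) \<Rightarrow> bool" where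
  "is_state h \<omega> \<longleftrightarrow>
     (\<forall>f\<in>Balg. \<forall>g\<in>Balg. \<omega> (\<lambda>m. f m + g m) = \<omega> f + \<omega> g) \<and>
     (\<forall>c. \<forall>f\<in>Balg. \<omega> (\<lambda>m. c * f m) = c * \<omega> f) \<and>
     \<omega> one_p = 1 \<and>
     (\<forall>f\<in>Balg. cstar f = f \<longrightarrow> Im (\<omega> f) = 0) \<and>
     (\<forall>f\<in>pos_cone h. Im (\<omega> f) = 0 \<and> 0 \<le> Re (\<omega> f))"

definition Rset :: "real \<Rightarrow> real \<Rightarrow> 'i::finite cpoly set" where
  "Rset h \<mu> = {f \<in> Balg. cstar f = f \<and>
     (\<forall>\<omega>. is_state h \<omega> \<and>
        \<omega> (wick h (\<lambda>m. J_p m - complex_of_real \<mu> * one_p m)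
                   (\<lambda>m. J_p m - complex_of_real \<mu> * one_p m)) = 0
        \<longrightarrow> Im (\<omega> f) = 0 \<and> 0 \<le> Re (\<omega> f))}"

definition supp_C :: "('a \<Rightarrow> complex) set \<Rightarrow> ('a \<Rightarrow> complex) set" where
  "supp_C Q = (let Q0 = Q \<inter> (\<lambda>f m. - f m) ` Q in
     {(\<lambda>m. a m + \<i> * b m) | a b. a \<in> Q0 \<and> b \<in> Q0})"

definition is_star_ideal :: "real \<Rightarrow> 'i::finite cpoly set \<Rightarrow> bool" where
  "is_star_ideal h I \<longleftrightarrow> I \<subseteq> Balg \<and> (\<lambda>_. 0) \<in> I \<and>
     (\<forall>f\<in>I. \<forall>g\<in>I. (\<lambda>m. f m + g m) \<in> I) \<and>
     (\<forall>c. \<forall>f\<in>I. (\<lambda>m. c * f m) \<in> I) \<and>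
     (\<forall>a\<in>Balg. \<forall>f\<in>I. wick h a f \<in> I \<and> wick h f a \<in> I) \<and>
     (\<forall>f\<in>I. cstar f \<in> I)"

definition gen_star_ideal :: "real \<Rightarrow> 'i::finite cpoly set \<Rightarrow> 'i cpoly set" where
  "gen_star_ideal h S = \<Inter>{I. is_star_ideal h I \<and> S \<subseteq> I}"

end

theory Submission
  imports Defs "HOL-Library.FuncSet"
begin

text \<open>
  Both sides are the kernel of the Fock representation \<open>\<pi>\<^sub>\<hbar>\<close> restricted to the homogeneous
  polynomials of degree \<open>k\<close>, on which \<open>\<J>\<close> acts as the scalar \<open>\<hbar>k\<close>.

  A state \<open>\<omega>\<close> with \<open>\<omega>((\<J> - \<hbar>k) \<star> (\<J> - \<hbar>k)) = 0\<close> annihilates every \<open>x \<star> (\<J> - \<hbar>k)\<close>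
  (Cauchy-Schwarz). Since \<open>\<J>\<^sup>m \<star> (\<J> - \<hbar>k) = \<J>\<^sup>m\<^sup>+\<^sup>1 + \<hbar>(m - k) \<J>\<^sup>m\<close> for the pointwise powers
  \<open>\<J>\<^sup>m\<close>, it annihilates \<open>\<J>\<^sup>m\<close> for \<open>m > k\<close>; as \<open>\<J>\<^sup>m\<close> is a positive combination of the positive
  monomials \<open>z^A zbar^A\<close> with \<open>|A| = m\<close>, it annihilates these, and the positivity of
  \<open>z^K zbar^K + z^L zbar^L + t z^K zbar^L + cnj t z^L zbar^K\<close> for \<open>|t| = 1\<close> extends this to all
  monomials of degree \<open>> k\<close>. Conversely, the vector states of homogeneous Fock vectors of degree
  \<open>k\<close> are such states, and by polarization their common kernel is the kernel of \<open>\<pi>\<^sub>\<hbar>\<close> on degree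
  \<open>k\<close>.

  On the other side, \<open>z^K zbar^L \<star> (\<J> - \<hbar>k) = \<J> z^K zbar^L + \<hbar>(|L| - k) z^K zbar^L\<close> raises
  degrees below \<open>k\<close> modulo right multiples of \<open>\<J> - \<hbar>k\<close>. Hence modulo these and the monomials of
  degree \<open>> k\<close>, all of which lie in the generated \<open>*\<close>-ideal, every element of \<open>\<B>\<^sub>\<hbar>\<close> is
  congruent to an element of \<open>\<P>\<^sup>k\<^sup>,\<^sup>k\<close>; and an element of \<open>\<P>\<^sup>k\<^sup>,\<^sup>k\<close> in the kernel of
  \<open>\<pi>\<^sub>\<hbar>\<close> on degree \<open>k\<close> is zero.
\<close>

lemma finite_multiindex_le: "finite {M::'i::finite \<Rightarrow> nat. M \<le> L \<and> P M}"
proof (rule finite_subset)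
  show "{M. M \<le> L \<and> P M} \<subseteq> PiE UNIV (\<lambda>j. {..L j})"
    by (auto simp: le_fun_def PiE_def extensional_def)
qed (simp add: finite_PiE)

lemma deg_add: "deg (\<lambda>j. A j + B j) = deg A + deg (B::'i::finite \<Rightarrow> nat)"
  by (simp add: deg_def sum.distrib)

lemma deg_diff: "B \<le> A \<Longrightarrow> deg (\<lambda>j. A j - B j) = deg A - deg (B::'i::finite \<Rightarrow> nat)"
  unfolding deg_def by (rule sum_subtractf_nat) (auto simp: le_fun_def)

lemma deg_mono: "B \<le> A \<Longrightarrow> deg B \<le> deg (A::'i::finite \<Rightarrow> nat)"
  unfolding deg_def by (rule sum_mono) (auto simp: le_fun_def)

lemma deg_eq_0_iff: "deg (A::'i::finite \<Rightarrow> nat) = 0 \<longleftrightarrow> A = (\<lambda>_. 0)"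
  unfolding deg_def by (auto simp: fun_eq_iff)

lemma deg_0: "deg (\<lambda>_::'i::finite. 0::nat) = 0"
  by (simp add: deg_def)

lemma le_deg_eq_imp_eq:
  assumes "B \<le> A" and "deg B = deg (A::'i::finite \<Rightarrow> nat)"
  shows "B = A"
proof -
  have "deg (\<lambda>j. A j - B j) = 0" using assms by (simp add: deg_diff)
  then have "\<forall>j. A j - B j = 0" by (simp add: deg_eq_0_iff fun_eq_iff)
  with assms(1) show "B = A" by (auto simp: le_fun_def fun_eq_iff intro: antisym)
qed

lemma mfact_pos: "mfact (K::'i::finite \<Rightarrow> nat) > 0"
  unfolding mfact_def by (rule prod_pos) auto

lemma mfact_nonzero: "mfact (K::'i::finite \<Rightarrow> nat) \<noteq> 0"
  using mfact_pos[of K] by simp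

lemma mfact_0: "mfact (\<lambda>_::'i::finite. 0::nat) = 1"
  by (simp add: mfact_def)

definition evec :: "'i \<Rightarrow> 'i \<Rightarrow> nat" where
  "evec i = (\<lambda>j. if j = i then 1 else 0)"

lemma evec_eq_iff: "evec i = evec j \<longleftrightarrow> i = j"
  by (auto simp: evec_def fun_eq_iff split: if_splits)

lemma deg_evec: "deg (evec i :: 'i::finite \<Rightarrow> nat) = 1"
  by (simp add: deg_def evec_def)

lemma mfact_evec: "mfact (evec i :: 'i::finite \<Rightarrow> nat) = 1"
  unfolding mfact_def evec_def by (rule prod.neutral) auto

lemma evec_le: "1 \<le> A i \<Longrightarrow> evec i \<le> A"
  by (auto simp: le_fun_def evec_def)

lemma le_evec_iff: "M \<le> evec i \<longleftrightarrow> M = (\<lambda>_. 0) \<or> M = evec i"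
proof
  assume "M \<le> evec i"
  then have M: "M j \<le> (if j = i then 1 else 0)" for j
    by (auto simp: le_fun_def evec_def)
  show "M = (\<lambda>_. 0) \<or> M = evec i"
  proof (cases "M i = 0")
    case True
    then have "M j = 0" for j using M[of j] by (cases "j = i") auto
    then have "M = (\<lambda>_. 0)" by blast
    then show ?thesis ..
  next
    case False
    then have "M j = evec i j" for j using M[of j] by (cases "j = i") (auto simp: evec_def)
    then have "M = evec i" by blast
    then show ?thesis ..
  qed
qed (auto simp: le_fun_def evec_def)

lemma minus_evec_eq_iff: "1 \<le> A i \<and> (\<lambda>j. A j - evec i j) = K \<longleftrightarrow> (\<lambda>j. K j + evec i j) = A"
  by (auto simp: evec_def fun_eq_iff)

lemma deg_minus_evec: "1 \<le> A i \<Longrightarrow> deg (\<lambda>j. A j - evec i j) = deg A - 1"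
  using deg_diff[OF evec_le[where A=A and i=i]] by (simp add: deg_evec)

lemma deg_eq_1_iff: "deg (K::'i::finite \<Rightarrow> nat) = 1 \<longleftrightarrow> (\<exists>i. K = evec i)"
proof
  assume d: "deg K = 1"
  then obtain i where "K i \<noteq> 0" using deg_eq_0_iff[of K] by auto
  then have "deg (\<lambda>j. K j - evec i j) = 0" using d deg_minus_evec[of K i] by simp
  then have "(\<lambda>j. (\<lambda>_. 0) j + evec i j) = K"
    using \<open>K i \<noteq> 0\<close> by (subst minus_evec_eq_iff[symmetric]) (simp add: deg_eq_0_iff)
  then show "\<exists>i. K = evec i" by auto
qed (auto simp: deg_evec)

lemma mfact_div_mfact_minus_evec:
  assumes "1 \<le> L i"
  shows "mfact L / mfact (\<lambda>j. L j - evec i j) = real (L (i::'i::finite))"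
proof -
  have "mfact L = fact (L i) * (\<Prod>j\<in>UNIV - {i}. fact (L j))"
    unfolding mfact_def by (simp add: prod.remove[of UNIV i])
  moreover have "mfact (\<lambda>j. L j - evec i j) = fact (L i - 1) * (\<Prod>j\<in>UNIV - {i}. fact (L j))"
    unfolding mfact_def by (simp add: prod.remove[of UNIV i] evec_def)
  moreover have "fact (L i) = real (L i) * fact (L i - 1)"
    using assms by (intro fact_reduce) simp
  moreover have "(\<Prod>j\<in>UNIV - {i}. fact (L j) :: real) \<noteq> 0" by simp
  ultimately show ?thesis by simp
qed

abbreviation fin :: "('a \<Rightarrow> complex) \<Rightarrow> bool" where
  "fin f \<equiv> finite (csupp f)"

definition monom :: "'i mon \<Rightarrow> 'i cpoly" where
  "monom p = (\<lambda>m. if m = p then 1 else 0)"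

definition fock_monom :: "('i \<Rightarrow> nat) \<Rightarrow> 'i fock" where
  "fock_monom N = (\<lambda>A. if A = N then 1 else 0)"

lemma monom_apply: "monom (X, Y) (A, B) = (if X = A \<and> Y = B then 1 else 0)"
  by (auto simp: monom_def)

lemma csupp_monom: "csupp (monom p) = {p}"
  by (auto simp: csupp_def monom_def)

lemma csupp_fock_monom: "csupp (fock_monom p) = {p}"
  by (auto simp: csupp_def fock_monom_def)

lemma csupp_add: "csupp (\<lambda>m. f m + g m) \<subseteq> csupp f \<union> csupp g"
  by (auto simp: csupp_def)

lemma csupp_scale: "csupp (\<lambda>m. c * f m) \<subseteq> csupp f"
  by (auto simp: csupp_def)

lemma fin_add: "fin f \<Longrightarrow> fin g \<Longrightarrow> fin (\<lambda>m. f m + g m)"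
  by (rule finite_subset[OF csupp_add]) auto

lemma fin_scale: "fin f \<Longrightarrow> fin (\<lambda>m. c * f m)"
  by (rule finite_subset[OF csupp_scale])

lemma fin_monom: "fin (monom p)"
  by (simp add: csupp_monom)

lemma fin_fock_monom: "fin (fock_monom p)"
  by (simp add: csupp_fock_monom)

lemma fin_zero: "fin (\<lambda>_. 0)"
  by (simp add: csupp_def)

lemma fin_sum: "finite P \<Longrightarrow> (\<And>p. p \<in> P \<Longrightarrow> fin (F p)) \<Longrightarrow> fin (\<lambda>m. \<Sum>p\<in>P. F p m)"
  by (rule finite_subset[of _ "\<Union>p\<in>P. csupp (F p)"])
    (auto simp: csupp_def elim: sum.not_neutral_contains_not_neutral)

lemma monom_expansion: "fin f \<Longrightarrow> f = (\<lambda>m. \<Sum>p\<in>csupp f. f p * monom p m)"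
  by (auto simp: fun_eq_iff monom_def csupp_def if_distrib cong: if_cong)

text \<open>
  \<open>wick_kernel h K L K' L' A B\<close> is the coefficient of \<open>z^A zbar^B\<close> in \<open>z^K zbar^L \<star> z^K' zbar^L'\<close>,
  and \<open>pi_kernel h K L M A\<close> that of \<open>z^A\<close> in \<open>\<pi>\<^sub>\<hbar>(z^K zbar^L) z^M\<close>.
\<close>

definition wick_coeff :: "real \<Rightarrow> ('i::finite \<Rightarrow> nat) \<Rightarrow> ('i \<Rightarrow> nat) \<Rightarrow> ('i \<Rightarrow> nat) \<Rightarrow> real" where
  "wick_coeff h L K' M = h ^ deg M / mfact M
              * (mfact L / mfact (\<lambda>j. L j - M j))
              * (mfact K' / mfact (\<lambda>j. K' j - M j))"

definition wick_kernel :: "real \<Rightarrow> ('i::finite \<Rightarrow> nat) \<Rightarrow> ('i \<Rightarrow> nat) \<Rightarrow> ('i \<Rightarrow> nat) \<Rightarrow> ('i \<Rightarrow> nat)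
   \<Rightarrow> ('i \<Rightarrow> nat) \<Rightarrow> ('i \<Rightarrow> nat) \<Rightarrow> complex" where
  "wick_kernel h K L K' L' A B = (\<Sum>M\<in>{M. M \<le> L \<and> M \<le> K'}.
       if (\<lambda>j. K j + K' j - M j) = A \<and> (\<lambda>j. L j - M j + L' j) = B
       then complex_of_real (wick_coeff h L K' M) else 0)"

definition pi_kernel :: "real \<Rightarrow> ('i::finite \<Rightarrow> nat) \<Rightarrow> ('i \<Rightarrow> nat) \<Rightarrow> ('i \<Rightarrow> nat) \<Rightarrow> ('i \<Rightarrow> nat) \<Rightarrow> complex" where
  "pi_kernel h K L M A = (if L \<le> M \<and> (\<lambda>j. K j + (M j - L j)) = A
       then complex_of_real (h ^ deg L * (mfact M / mfact (\<lambda>j. M j - L j))) else 0)"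

definition fock_weight :: "real \<Rightarrow> ('i::finite \<Rightarrow> nat) \<Rightarrow> complex" where
  "fock_weight h A = complex_of_real (h ^ deg A * mfact A)"

lemma wick_expand:
  "wick h f g (A, B) = (\<Sum>(K, L)\<in>csupp f. \<Sum>(K', L')\<in>csupp g. f (K, L) * g (K', L') * wick_kernel h K L K' L' A B)"
  unfolding wick_def wick_kernel_def wick_coeff_def
  by (simp add: sum_distrib_left if_distrib mult_ac cong: if_cong)

lemma wick_expand_superset:
  assumes "finite S" "csupp f \<subseteq> S" "finite T" "csupp g \<subseteq> T"
  shows "wick h f g (A, B) = (\<Sum>(K, L)\<in>S. \<Sum>(K', L')\<in>T. f (K, L) * g (K', L') * wick_kernel h K L K' L' A B)"
proof -
  have "wick h f g (A, B) = (\<Sum>(K, L)\<in>csupp f. \<Sum>(K', L')\<in>T. f (K, L) * g (K', L') * wick_kernel h K L K' L' A B)"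
    unfolding wick_expand split_def
    by (intro sum.cong refl sum.mono_neutral_left) (use assms in \<open>auto simp: csupp_def\<close>)
  also have "\<dots> = (\<Sum>(K, L)\<in>S. \<Sum>(K', L')\<in>T. f (K, L) * g (K', L') * wick_kernel h K L K' L' A B)"
    by (rule sum.mono_neutral_left) (use assms in \<open>auto simp: csupp_def\<close>)
  finally show ?thesis .
qed

lemma pi_rep_expand:
  "pi_rep h f g A = (\<Sum>(K, L)\<in>csupp f. \<Sum>M\<in>csupp g. f (K, L) * g M * pi_kernel h K L M A)"
  unfolding pi_rep_def pi_kernel_def
  by (simp add: if_distrib cong: if_cong)

lemma pi_rep_expand_superset:
  assumes "finite S" "csupp f \<subseteq> S" "finite T" "csupp g \<subseteq> T"
  shows "pi_rep h f g A = (\<Sum>(K, L)\<in>S. \<Sum>M\<in>T. f (K, L) * g M * pi_kernel h K L M A)"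
proof -
  have "pi_rep h f g A = (\<Sum>(K, L)\<in>csupp f. \<Sum>M\<in>T. f (K, L) * g M * pi_kernel h K L M A)"
    unfolding pi_rep_expand split_def
    by (intro sum.cong refl sum.mono_neutral_left) (use assms in \<open>auto simp: csupp_def\<close>)
  also have "\<dots> = (\<Sum>(K, L)\<in>S. \<Sum>M\<in>T. f (K, L) * g M * pi_kernel h K L M A)"
    by (rule sum.mono_neutral_left) (use assms in \<open>auto simp: csupp_def\<close>)
  finally show ?thesis .
qed

lemma fock_inner_expand_superset:
  assumes "finite S" "csupp u \<inter> csupp v \<subseteq> S"
  shows "fock_inner h u v = (\<Sum>A\<in>S. cnj (u A) * v A * fock_weight h A)"
  unfolding fock_inner_def fock_weight_def
  by (rule sum.mono_neutral_left) (use assms in \<open>auto simp: csupp_def\<close>)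

definition wick_support :: "'i::finite cpoly \<Rightarrow> 'i cpoly \<Rightarrow> 'i mon set" where
  "wick_support f g = (\<Union>(K,L)\<in>csupp f. \<Union>(K',L')\<in>csupp g.
      (\<lambda>M. ((\<lambda>j. K j + K' j - M j), (\<lambda>j. L j - M j + L' j))) ` {M. M \<le> L \<and> M \<le> K'})"

definition pi_support :: "'i::finite cpoly \<Rightarrow> 'i fock \<Rightarrow> ('i \<Rightarrow> nat) set" where
  "pi_support f g = (\<Union>(K,L)\<in>csupp f. \<Union>M\<in>csupp g. {\<lambda>j. K j + (M j - L j)})"

lemma finite_wick_support: "fin f \<Longrightarrow> fin g \<Longrightarrow> finite (wick_support f g)"
  unfolding wick_support_def split_def by (intro finite_UN_I finite_imageI finite_multiindex_le)

lemma finite_pi_support: "fin f \<Longrightarrow> fin g \<Longrightarrow> finite (pi_support f g)"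
  unfolding pi_support_def by auto

lemma wick_kernel_nonzeroD:
  assumes "wick_kernel h K L K' L' A B \<noteq> 0"
  shows "\<exists>M. M \<le> L \<and> M \<le> K' \<and> (\<lambda>j. K j + K' j - M j) = A \<and> (\<lambda>j. L j - M j + L' j) = B"
proof -
  from assms obtain M where "M \<in> {M. M \<le> L \<and> M \<le> K'}"
    and "(if (\<lambda>j. K j + K' j - M j) = A \<and> (\<lambda>j. L j - M j + L' j) = B
          then complex_of_real (wick_coeff h L K' M) else 0) \<noteq> 0"
    unfolding wick_kernel_def by (rule sum.not_neutral_contains_not_neutral)
  then show ?thesis by (auto split: if_splits)
qed

lemma csupp_wick_subset: "csupp (wick h f g) \<subseteq> wick_support f g"
proof
  fix x assume "x \<in> csupp (wick h f g)"
  then obtain A B where x: "x = (A, B)" and nz: "wick h f g (A, B) \<noteq> 0"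
    by (cases x) (auto simp: csupp_def)
  from nz obtain p where p: "p \<in> csupp f"
    and "(\<Sum>q\<in>csupp g. f p * g q * wick_kernel h (fst p) (snd p) (fst q) (snd q) A B) \<noteq> 0"
    unfolding wick_expand split_def prod.collapse by (rule sum.not_neutral_contains_not_neutral)
  from this(2) obtain q where q: "q \<in> csupp g" and "f p * g q * wick_kernel h (fst p) (snd p) (fst q) (snd q) A B \<noteq> 0"
    by (rule sum.not_neutral_contains_not_neutral)
  then have "wick_kernel h (fst p) (snd p) (fst q) (snd q) A B \<noteq> 0" by simp
  then show "x \<in> wick_support f g"
    unfolding wick_support_def x using p q by (fastforce dest: wick_kernel_nonzeroD)
qed

lemma fin_wick: "fin f \<Longrightarrow> fin g \<Longrightarrow> fin (wick h f g)"
  by (rule finite_subset[OF csupp_wick_subset finite_wick_support])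

lemma csupp_pi_rep_subset: "csupp (pi_rep h f g) \<subseteq> pi_support f g"
proof
  fix A assume "A \<in> csupp (pi_rep h f g)"
  then obtain p where p: "p \<in> csupp f" and "(\<Sum>M\<in>csupp g. f p * g M * pi_kernel h (fst p) (snd p) M A) \<noteq> 0"
    unfolding pi_rep_expand split_def csupp_def by (auto elim: sum.not_neutral_contains_not_neutral)
  from this(2) obtain M where M: "M \<in> csupp g" and "f p * g M * pi_kernel h (fst p) (snd p) M A \<noteq> 0"
    by (rule sum.not_neutral_contains_not_neutral)
  then have "pi_kernel h (fst p) (snd p) M A \<noteq> 0" by simp
  then show "A \<in> pi_support f g"
    unfolding pi_support_def pi_kernel_def using p M by (fastforce split: if_splits)
qed

lemma fin_pi_rep: "fin f \<Longrightarrow> fin g \<Longrightarrow> fin (pi_rep h f g)"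
  by (rule finite_subset[OF csupp_pi_rep_subset finite_pi_support])

lemma wick_add_left:
  assumes "fin f1" "fin f2" "fin g"
  shows "wick h (\<lambda>m. f1 m + f2 m) g = (\<lambda>m. wick h f1 g m + wick h f2 g m)"
proof (rule ext, clarify)
  fix A B
  let ?S = "csupp f1 \<union> csupp f2"
  have f: "finite ?S" using assms by auto
  have s: "csupp (\<lambda>m. f1 m + f2 m) \<subseteq> ?S" "csupp f1 \<subseteq> ?S" "csupp f2 \<subseteq> ?S" by (auto simp: csupp_def)
  show "wick h (\<lambda>m. f1 m + f2 m) g (A, B) = wick h f1 g (A, B) + wick h f2 g (A, B)"
    unfolding wick_expand_superset[OF f s(1) assms(3) order_refl] wick_expand_superset[OF f s(2) assms(3) order_refl]
       wick_expand_superset[OF f s(3) assms(3) order_refl]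
    by (simp add: split_def distrib_right sum.distrib)
qed

lemma wick_add_right:
  assumes "fin f" "fin g1" "fin g2"
  shows "wick h f (\<lambda>m. g1 m + g2 m) = (\<lambda>m. wick h f g1 m + wick h f g2 m)"
proof (rule ext, clarify)
  fix A B
  let ?T = "csupp g1 \<union> csupp g2"
  have f: "finite ?T" using assms by auto
  have s: "csupp (\<lambda>m. g1 m + g2 m) \<subseteq> ?T" "csupp g1 \<subseteq> ?T" "csupp g2 \<subseteq> ?T" by (auto simp: csupp_def)
  show "wick h f (\<lambda>m. g1 m + g2 m) (A, B) = wick h f g1 (A, B) + wick h f g2 (A, B)"
    unfolding wick_expand_superset[OF assms(1) order_refl f s(1)] wick_expand_superset[OF assms(1) order_refl f s(2)]
       wick_expand_superset[OF assms(1) order_refl f s(3)]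
    by (simp add: split_def distrib_right distrib_left sum.distrib)
qed

lemma wick_scale_left:
  assumes "fin f" "fin g"
  shows "wick h (\<lambda>m. c * f m) g = (\<lambda>m. c * wick h f g m)"
proof (rule ext, clarify)
  fix A B
  show "wick h (\<lambda>m. c * f m) g (A, B) = c * wick h f g (A, B)"
    unfolding wick_expand_superset[OF assms(1) csupp_scale assms(2) order_refl] wick_expand_superset[OF assms(1) order_refl assms(2) order_refl]
    by (simp add: split_def sum_distrib_left mult_ac)
qed

lemma wick_scale_right:
  assumes "fin f" "fin g"
  shows "wick h f (\<lambda>m. c * g m) = (\<lambda>m. c * wick h f g m)"
proof (rule ext, clarify)
  fix A B
  show "wick h f (\<lambda>m. c * g m) (A, B) = c * wick h f g (A, B)"
    unfolding wick_expand_superset[OF assms(1) order_refl assms(2) csupp_scale] wick_expand_superset[OF assms(1) order_refl assms(2) order_refl]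
    by (simp add: split_def sum_distrib_left mult_ac)
qed

lemma pi_rep_add_left:
  assumes "fin f1" "fin f2" "fin g"
  shows "pi_rep h (\<lambda>m. f1 m + f2 m) g = (\<lambda>m. pi_rep h f1 g m + pi_rep h f2 g m)"
proof (rule ext)
  fix A
  let ?S = "csupp f1 \<union> csupp f2"
  have f: "finite ?S" using assms by auto
  have s: "csupp (\<lambda>m. f1 m + f2 m) \<subseteq> ?S" "csupp f1 \<subseteq> ?S" "csupp f2 \<subseteq> ?S" by (auto simp: csupp_def)
  show "pi_rep h (\<lambda>m. f1 m + f2 m) g A = pi_rep h f1 g A + pi_rep h f2 g A"
    unfolding pi_rep_expand_superset[OF f s(1) assms(3) order_refl] pi_rep_expand_superset[OF f s(2) assms(3) order_refl]
       pi_rep_expand_superset[OF f s(3) assms(3) order_refl]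
    by (simp add: split_def distrib_right sum.distrib)
qed

lemma pi_rep_add_right:
  assumes "fin f" "fin g1" "fin g2"
  shows "pi_rep h f (\<lambda>m. g1 m + g2 m) = (\<lambda>m. pi_rep h f g1 m + pi_rep h f g2 m)"
proof (rule ext)
  fix A
  let ?T = "csupp g1 \<union> csupp g2"
  have f: "finite ?T" using assms by auto
  have s: "csupp (\<lambda>m. g1 m + g2 m) \<subseteq> ?T" "csupp g1 \<subseteq> ?T" "csupp g2 \<subseteq> ?T" by (auto simp: csupp_def)
  show "pi_rep h f (\<lambda>m. g1 m + g2 m) A = pi_rep h f g1 A + pi_rep h f g2 A"
    unfolding pi_rep_expand_superset[OF assms(1) order_refl f s(1)] pi_rep_expand_superset[OF assms(1) order_refl f s(2)]
       pi_rep_expand_superset[OF assms(1) order_refl f s(3)]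
    by (simp add: split_def distrib_right distrib_left sum.distrib)
qed

lemma pi_rep_scale_left:
  assumes "fin f" "fin g"
  shows "pi_rep h (\<lambda>m. c * f m) g = (\<lambda>m. c * pi_rep h f g m)"
proof (rule ext)
  fix A
  show "pi_rep h (\<lambda>m. c * f m) g A = c * pi_rep h f g A"
    unfolding pi_rep_expand_superset[OF assms(1) csupp_scale assms(2) order_refl] pi_rep_expand_superset[OF assms(1) order_refl assms(2) order_refl]
    by (simp add: split_def sum_distrib_left mult_ac)
qed

lemma pi_rep_scale_right:
  assumes "fin f" "fin g"
  shows "pi_rep h f (\<lambda>m. c * g m) = (\<lambda>m. c * pi_rep h f g m)"
proof (rule ext)
  fix A
  show "pi_rep h f (\<lambda>m. c * g m) A = c * pi_rep h f g A"
    unfolding pi_rep_expand_superset[OF assms(1) order_refl assms(2) csupp_scale] pi_rep_expand_superset[OF assms(1) order_refl assms(2) order_refl]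
    by (simp add: split_def sum_distrib_left mult_ac)
qed

lemma fock_inner_add_right:
  assumes "fin u" "fin v1" "fin v2"
  shows "fock_inner h u (\<lambda>m. v1 m + v2 m) = fock_inner h u v1 + fock_inner h u v2"
  unfolding fock_inner_expand_superset[OF assms(1) Int_lower1] 
  by (simp add: distrib_left distrib_right sum.distrib)

lemma fock_inner_add_left:
  assumes "fin u1" "fin u2" "fin v"
  shows "fock_inner h (\<lambda>m. u1 m + u2 m) v = fock_inner h u1 v + fock_inner h u2 v"
  unfolding fock_inner_expand_superset[OF assms(3) Int_lower2] 
  by (simp add: distrib_left distrib_right sum.distrib)

lemma fock_inner_scale_right:
  assumes "fin u"
  shows "fock_inner h u (\<lambda>m. c * v m) = c * fock_inner h u v"
  unfolding fock_inner_expand_superset[OF assms(1) Int_lower1] 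
  by (simp add: sum_distrib_left mult_ac)

lemma fock_inner_scale_left:
  assumes "fin v"
  shows "fock_inner h (\<lambda>m. c * u m) v = cnj c * fock_inner h u v"
  unfolding fock_inner_expand_superset[OF assms(1) Int_lower2] 
  by (simp add: sum_distrib_left mult_ac)

lemma fock_inner_commute: "fock_inner h v u = cnj (fock_inner h u v)"
  unfolding fock_inner_def by (simp add: Int_commute mult_ac)

lemma pi_rep_zero_left: "pi_rep h (\<lambda>_. 0) v = (\<lambda>_. 0)"
  by (simp add: pi_rep_def csupp_def fun_eq_iff)

lemma pi_rep_zero_right: "pi_rep h f (\<lambda>_. 0) = (\<lambda>_. 0)"
  by (simp add: pi_rep_def csupp_def fun_eq_iff)

lemma fock_inner_zero_left: "fock_inner h (\<lambda>_. 0) u = 0"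
  by (simp add: fock_inner_def csupp_def)

lemma fock_inner_zero_right: "fock_inner h u (\<lambda>_. 0) = 0"
  by (simp add: fock_inner_def csupp_def)

lemma pi_rep_sum_left:
  "finite I \<Longrightarrow> (\<And>i. i \<in> I \<Longrightarrow> fin (F i)) \<Longrightarrow> fin v \<Longrightarrow>
    pi_rep h (\<lambda>m. \<Sum>i\<in>I. F i m) v = (\<lambda>A. \<Sum>i\<in>I. pi_rep h (F i) v A)"
  by (induction I rule: finite_induct) (simp_all add: pi_rep_zero_left pi_rep_add_left fin_sum)

lemma wick_sum_right:
  "finite I \<Longrightarrow> (\<And>i. i \<in> I \<Longrightarrow> fin (G i)) \<Longrightarrow> fin f \<Longrightarrow>
    wick h f (\<lambda>m. \<Sum>i\<in>I. G i m) = (\<lambda>x. \<Sum>i\<in>I. wick h f (G i) x)"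
proof (induction I rule: finite_induct)
  case empty
  then show ?case by (simp add: wick_def csupp_def)
next
  case (insert x I)
  then show ?case by (simp add: wick_add_right fin_sum)
qed

lemma wick_monom_expansion:
  assumes f: "fin f" and g: "fin g"
  shows "wick h f g x = (\<Sum>p\<in>csupp f. f p * wick h (monom p) g x)"
proof -
  obtain A B where x: "x = (A, B)" by (cases x)
  have "wick h (monom p) g (A, B) = (\<Sum>(K', L')\<in>csupp g. g (K', L') * wick_kernel h (fst p) (snd p) K' L' A B)" for p
    using wick_expand_superset[where S="{p}" and h=h and A=A and B=B, OF _ equalityD1[OF csupp_monom] g order_refl]
    by (simp add: monom_def split_def)
  then show ?thesis unfolding x wick_expand_superset[OF f order_refl g order_refl]
    by (simp add: split_def sum_distrib_left mult_ac)
qed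

definition fock_sqnorm :: "real \<Rightarrow> 'i::finite fock \<Rightarrow> real" where
  "fock_sqnorm h u = (\<Sum>A\<in>csupp u. (cmod (u A))\<^sup>2 * (h ^ deg A * mfact A))"

lemma fock_inner_self_eq: "fock_inner h u u = complex_of_real (fock_sqnorm h u)"
  unfolding fock_inner_def fock_sqnorm_def of_real_sum
  by (intro sum.cong) (simp_all only: Int_absorb of_real_mult complex_norm_square mult_ac)

lemma fock_sqnorm_nonneg: "0 < h \<Longrightarrow> 0 \<le> fock_sqnorm h u"
  unfolding fock_sqnorm_def by (auto intro!: sum_nonneg mult_nonneg_nonneg simp: mfact_pos less_imp_le)

lemma fock_sqnorm_pos:
  assumes h: "0 < h" and v: "fin v" and A: "v A \<noteq> 0"
  shows "0 < fock_sqnorm h v"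
  unfolding fock_sqnorm_def
proof (rule sum_pos2[OF v])
  show "A \<in> csupp v" using A by (simp add: csupp_def)
  show "0 < (cmod (v A))\<^sup>2 * (h ^ deg A * mfact A)" using A h by (simp add: mfact_pos)
qed (use h in \<open>auto intro!: mult_nonneg_nonneg simp: mfact_pos less_imp_le\<close>)

lemma fock_inner_self_nonneg: "0 < h \<Longrightarrow> Im (fock_inner h u u) = 0 \<and> 0 \<le> Re (fock_inner h u u)"
  by (simp add: fock_inner_self_eq fock_sqnorm_nonneg)

lemma fock_weight_nonzero: "0 < h \<Longrightarrow> fock_weight h A \<noteq> 0"
  by (simp add: fock_weight_def mfact_nonzero)

lemma fock_inner_fock_monom: "fock_inner h (fock_monom A) w = w A * fock_weight h A"
proof -
  have "csupp (fock_monom A) \<inter> csupp w \<subseteq> {A}" by (auto simp: csupp_fock_monom)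
  from fock_inner_expand_superset[OF _ this] show ?thesis by (simp add: fock_monom_def)
qed

lemma pi_rep_fock_monom:
  "fin f \<Longrightarrow> pi_rep h f (fock_monom N) A = (\<Sum>p\<in>csupp f. f p * pi_kernel h (fst p) (snd p) N A)"
  using pi_rep_expand_superset[where T="{N}" and h=h and A=A, OF _ order_refl _ equalityD1[OF csupp_fock_monom]]
  by (simp add: fock_monom_def split_def)

section \<open>The Fock representation is multiplicative\<close>

text \<open>The one-variable case of the multiplicativity of \<open>\<pi>\<^sub>\<hbar>\<close> on monomials.\<close>

lemma vandermonde_fact_sum:
  fixes h :: real
  assumes "l' \<le> n" "l \<le> a + (n - l')"
  shows "(\<Sum>m\<in>{m. m \<le> l \<and> m \<le> a \<and> l - m \<le> n - l'}. h^m / fact m * (fact l / fact (l - m)) * (fact a / fact (a - m))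
           * (h^(l - m + l') * (fact n / fact (n - (l - m + l'))))) =
         h^l' * (fact n / fact (n - l')) * (h^l * (fact (a + (n - l')) / fact (a + (n - l') - l)))"
proof -
  define p where "p = n - l'"
  have tm: "h^m / fact m * (fact l / fact (l - m)) * (fact a / fact (a - m))
           * (h^(l - m + l') * (fact n / fact (n - (l - m + l')))) =
        h^(l+l') * (fact n / fact p) * fact l * (real (a choose m) * real (p choose (l - m)))"
    if m: "m \<le> l" "m \<le> a" "l - m \<le> p" for m
  proof -
    have e1: "n - (l - m + l') = p - (l - m)" using m assms unfolding p_def by simp
    have e2: "h^m * h^(l - m + l') = h^(l+l')" using m by (simp add: power_add[symmetric])
    show ?thesis
      unfolding e1 binomial_fact[OF m(2)] binomial_fact[OF m(3)]
      using e2 by (simp add: field_simps)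
  qed
  have "(\<Sum>m\<in>{m. m \<le> l \<and> m \<le> a \<and> l - m \<le> n - l'}. h^m / fact m * (fact l / fact (l - m)) * (fact a / fact (a - m))
           * (h^(l - m + l') * (fact n / fact (n - (l - m + l'))))) =
        (\<Sum>m\<in>{m. m \<le> l \<and> m \<le> a \<and> l - m \<le> p}. h^(l+l') * (fact n / fact p) * fact l * (real (a choose m) * real (p choose (l - m))))"
    unfolding p_def[symmetric] by (intro sum.cong refl) (rule tm; simp)
  also have "\<dots> = (\<Sum>m\<le>l. h^(l+l') * (fact n / fact p) * fact l * (real (a choose m) * real (p choose (l - m))))"
    by (rule sum.mono_neutral_left) auto
  also have "\<dots> = h^(l+l') * (fact n / fact p) * fact l * real (\<Sum>m\<le>l. (a choose m) * (p choose (l - m)))"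
    by (simp add: sum_distrib_left)
  also have "\<dots> = h^(l+l') * (fact n / fact p) * (fact l * real ((a + p) choose l))"
    by (simp add: vandermonde)
  also have "\<dots> = h^(l+l') * (fact n / fact p) * (fact (a + p) / fact (a + p - l))"
    using assms by (subst fact_binomial) (auto simp: p_def)
  finally show ?thesis by (simp add: p_def power_add)
qed

lemma pi_kernel_wick_index:
  assumes LN: "L' \<le> N" and M: "M \<le> L" "M \<le> K'"
  shows "pi_kernel h (\<lambda>j. K j + K' j - M j) (\<lambda>j. L j - M j + L' j) N A =
    (if (\<forall>j. L j - M j \<le> N j - L' j) \<and> (\<lambda>j. K j + (K' j + (N j - L' j) - L j)) = A
     then complex_of_real (h ^ deg (\<lambda>j. L j - M j + L' j) * (mfact N / mfact (\<lambda>j. N j - (L j - M j + L' j))))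
     else 0)"
proof -
  have le_iff: "(\<lambda>j. L j - M j + L' j) \<le> N \<longleftrightarrow> (\<forall>j. L j - M j \<le> N j - L' j)"
    using LN unfolding le_fun_def by (metis le_diff_conv2)
  moreover have "(\<lambda>j. K j + K' j - M j + (N j - (L j - M j + L' j))) = (\<lambda>j. K j + (K' j + (N j - L' j) - L j))"
    if "\<forall>j. L j - M j \<le> N j - L' j"
  proof
    fix j
    have "L j - M j \<le> N j - L' j" "L' j \<le> N j" "M j \<le> L j" "M j \<le> K' j"
      using that LN M by (auto simp: le_fun_def)
    then show "K j + K' j - M j + (N j - (L j - M j + L' j)) = K j + (K' j + (N j - L' j) - L j)"
      by linarith
  qed
  ultimately show ?thesis unfolding pi_kernel_def by auto
qed

lemma wick_coeff_mult_pi_kernel_coeff: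
  "wick_coeff h L K' M * (h ^ deg (\<lambda>j. L j - M j + L' j) * (mfact N / mfact (\<lambda>j. N j - (L j - M j + L' j))))
    = (\<Prod>j\<in>UNIV. h ^ M j / fact (M j) * (fact (L j) / fact (L j - M j)) * (fact (K' j) / fact (K' j - M j))
        * (h ^ (L j - M j + L' j) * (fact (N j) / fact (N j - (L j - M j + L' j)))))"
  unfolding wick_coeff_def deg_def mfact_def
  by (simp add: prod.distrib prod_dividef power_sum)

lemma wick_kernel_pi_kernel_sum_factorizes:
  fixes K L K' L' N A :: "'i::finite \<Rightarrow> nat"
  assumes LN: "L' \<le> N" and L: "L \<le> (\<lambda>j. K' j + (N j - L' j))" and A: "(\<lambda>j. K j + (K' j + (N j - L' j) - L j)) = A"
  shows "(\<Sum>M\<in>{M. M \<le> L \<and> M \<le> K'}. complex_of_real (wick_coeff h L K' M) * pi_kernel h (\<lambda>j. K j + K' j - M j) (\<lambda>j. L j - M j + L' j) N A) =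
    complex_of_real (h ^ deg L' * (mfact N / mfact (\<lambda>j. N j - L' j))
      * (h ^ deg L * (mfact (\<lambda>j. K' j + (N j - L' j)) / mfact (\<lambda>j. K' j + (N j - L' j) - L j))))"
proof -
  let ?S = "{M. M \<le> L \<and> M \<le> K' \<and> (\<forall>j. L j - M j \<le> N j - L' j)}"
  let ?t = "\<lambda>j m. h ^ m / fact m * (fact (L j) / fact (L j - m)) * (fact (K' j) / fact (K' j - m))
        * (h ^ (L j - m + L' j) * (fact (N j) / fact (N j - (L j - m + L' j))))"
  note pk = pi_kernel_wick_index[OF LN, where h=h and K=K and A=A]
  have "(\<Sum>M\<in>{M. M \<le> L \<and> M \<le> K'}. complex_of_real (wick_coeff h L K' M) * pi_kernel h (\<lambda>j. K j + K' j - M j) (\<lambda>j. L j - M j + L' j) N A)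
     = (\<Sum>M\<in>?S. complex_of_real (wick_coeff h L K' M) * pi_kernel h (\<lambda>j. K j + K' j - M j) (\<lambda>j. L j - M j + L' j) N A)"
    by (rule sum.mono_neutral_right) (auto simp: finite_multiindex_le pk)
  also have "\<dots> = (\<Sum>M\<in>?S. complex_of_real (\<Prod>j\<in>UNIV. ?t j (M j)))"
  proof (rule sum.cong[OF refl])
    fix M assume "M \<in> ?S"
    with A have "complex_of_real (wick_coeff h L K' M) * pi_kernel h (\<lambda>j. K j + K' j - M j) (\<lambda>j. L j - M j + L' j) N A
        = complex_of_real (wick_coeff h L K' M * (h ^ deg (\<lambda>j. L j - M j + L' j) * (mfact N / mfact (\<lambda>j. N j - (L j - M j + L' j)))))"
      by (simp add: pk)
    then show "complex_of_real (wick_coeff h L K' M) * pi_kernel h (\<lambda>j. K j + K' j - M j) (\<lambda>j. L j - M j + L' j) N A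
        = complex_of_real (\<Prod>j\<in>UNIV. ?t j (M j))"
      by (simp only: wick_coeff_mult_pi_kernel_coeff)
  qed
  also have "?S = PiE UNIV (\<lambda>j. {m. m \<le> L j \<and> m \<le> K' j \<and> L j - m \<le> N j - L' j})"
    by (auto simp: le_fun_def PiE_def extensional_def)
  also have "(\<Sum>M\<in>\<dots>. complex_of_real (\<Prod>j\<in>UNIV. ?t j (M j)))
      = complex_of_real (\<Prod>j\<in>UNIV. \<Sum>m\<in>{m. m \<le> L j \<and> m \<le> K' j \<and> L j - m \<le> N j - L' j}. ?t j m)"
    by (subst prod_sum_PiE) auto
  also have "(\<Prod>j\<in>UNIV. \<Sum>m\<in>{m. m \<le> L j \<and> m \<le> K' j \<and> L j - m \<le> N j - L' j}. ?t j m)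
     = (\<Prod>j\<in>UNIV. h ^ L' j * (fact (N j) / fact (N j - L' j))
          * (h ^ L j * (fact (K' j + (N j - L' j)) / fact (K' j + (N j - L' j) - L j))))"
    using LN L by (intro prod.cong refl vandermonde_fact_sum) (auto simp: le_fun_def)
  also have "\<dots> = h ^ deg L' * (mfact N / mfact (\<lambda>j. N j - L' j))
      * (h ^ deg L * (mfact (\<lambda>j. K' j + (N j - L' j)) / mfact (\<lambda>j. K' j + (N j - L' j) - L j)))"
    unfolding deg_def mfact_def by (simp add: prod.distrib prod_dividef power_sum)
  finally show ?thesis .
qed

text \<open>\<open>\<pi>\<^sub>\<hbar>(z^K zbar^L \<star> z^K' zbar^L') z^N = \<pi>\<^sub>\<hbar>(z^K zbar^L) (\<pi>\<^sub>\<hbar>(z^K' zbar^L') z^N)\<close>, on coefficients.\<close>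

lemma wick_kernel_pi_kernel_sum:
  fixes K L K' L' N A :: "'i::finite \<Rightarrow> nat"
  shows "(\<Sum>M\<in>{M. M \<le> L \<and> M \<le> K'}. complex_of_real (wick_coeff h L K' M) * pi_kernel h (\<lambda>j. K j + K' j - M j) (\<lambda>j. L j - M j + L' j) N A) =
   (if L' \<le> N then complex_of_real (h ^ deg L' * (mfact N / mfact (\<lambda>j. N j - L' j))) * pi_kernel h K L (\<lambda>j. K' j + (N j - L' j)) A else 0)"
proof (cases "L' \<le> N")
  case False
  then have "\<not> (\<lambda>j. L j - M j + L' j) \<le> N" for M
    unfolding le_fun_def by (metis le_add2 le_trans add.commute)
  then show ?thesis using False by (auto simp: pi_kernel_def intro!: sum.neutral)
next
  case LN: True
  show ?thesis
  proof (cases "L \<le> (\<lambda>j. K' j + (N j - L' j)) \<and> (\<lambda>j. K j + (K' j + (N j - L' j) - L j)) = A")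
    case True
    then show ?thesis
      using wick_kernel_pi_kernel_sum_factorizes[OF LN conjunct1[OF True] conjunct2[OF True], where h=h] LN
      unfolding pi_kernel_def by simp
  next
    case False
    have no_term: "\<not> ((\<forall>j. L j - M j \<le> N j - L' j) \<and> (\<lambda>j. K j + (K' j + (N j - L' j) - L j)) = A)"
      if "M \<le> K'" for M
      using False that unfolding le_fun_def
      by (metis add.commute le_diff_conv le_trans add_le_mono1 diff_le_mono2 add_le_cancel_left)
    have "pi_kernel h (\<lambda>j. K j + K' j - M j) (\<lambda>j. L j - M j + L' j) N A = 0"
      if "M \<le> L" "M \<le> K'" for M
      using pi_kernel_wick_index[OF LN that, of h K A] no_term[OF that(2)] by simp
    moreover have "pi_kernel h K L (\<lambda>j. K' j + (N j - L' j)) A = 0"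
      using False unfolding pi_kernel_def by auto
    ultimately show ?thesis by (auto intro!: sum.neutral)
  qed
qed

lemma sum_reorder4: "(\<Sum>a\<in>A. \<Sum>b\<in>B. \<Sum>c\<in>C. \<Sum>d\<in>D. X a b c d) = (\<Sum>c\<in>C. \<Sum>d\<in>D. \<Sum>b\<in>B. \<Sum>a\<in>A. X a b c d)"
proof -
  have "(\<Sum>a\<in>A. \<Sum>b\<in>B. \<Sum>c\<in>C. \<Sum>d\<in>D. X a b c d) = (\<Sum>a\<in>A. \<Sum>c\<in>C. \<Sum>d\<in>D. \<Sum>b\<in>B. X a b c d)"
  proof (intro sum.cong refl)
    fix a
    have "(\<Sum>b\<in>B. \<Sum>c\<in>C. \<Sum>d\<in>D. X a b c d) = (\<Sum>c\<in>C. \<Sum>b\<in>B. \<Sum>d\<in>D. X a b c d)" by (rule sum.swap)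
    also have "\<dots> = (\<Sum>c\<in>C. \<Sum>d\<in>D. \<Sum>b\<in>B. X a b c d)" by (intro sum.cong refl) (rule sum.swap)
    finally show "(\<Sum>b\<in>B. \<Sum>c\<in>C. \<Sum>d\<in>D. X a b c d) = (\<Sum>c\<in>C. \<Sum>d\<in>D. \<Sum>b\<in>B. X a b c d)" .
  qed
  also have "\<dots> = (\<Sum>c\<in>C. \<Sum>a\<in>A. \<Sum>d\<in>D. \<Sum>b\<in>B. X a b c d)" by (rule sum.swap)
  also have "\<dots> = (\<Sum>c\<in>C. \<Sum>d\<in>D. \<Sum>a\<in>A. \<Sum>b\<in>B. X a b c d)" by (intro sum.cong refl) (rule sum.swap)
  also have "\<dots> = (\<Sum>c\<in>C. \<Sum>d\<in>D. \<Sum>b\<in>B. \<Sum>a\<in>A. X a b c d)" by (intro sum.cong refl) (rule sum.swap)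
  finally show ?thesis .
qed

lemma sum_rotate3: "(\<Sum>a\<in>A. \<Sum>b\<in>B. \<Sum>c\<in>C. X a b c) = (\<Sum>b\<in>B. \<Sum>c\<in>C. \<Sum>a\<in>A. X a b c)"
proof -
  have "(\<Sum>a\<in>A. \<Sum>b\<in>B. \<Sum>c\<in>C. X a b c) = (\<Sum>b\<in>B. \<Sum>a\<in>A. \<Sum>c\<in>C. X a b c)" by (rule sum.swap)
  also have "\<dots> = (\<Sum>b\<in>B. \<Sum>c\<in>C. \<Sum>a\<in>A. X a b c)" by (intro sum.cong refl) (rule sum.swap)
  finally show ?thesis .
qed

lemma sum_wick_support_collapse:
  assumes "fin f" "fin g" "(K,L) \<in> csupp f" "(K',L') \<in> csupp g"
  shows "(\<Sum>r\<in>wick_support f g. wick_kernel h K L K' L' (fst r) (snd r) * pi_kernel h (fst r) (snd r) N A) =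
    (\<Sum>M\<in>{M. M \<le> L \<and> M \<le> K'}. complex_of_real (wick_coeff h L K' M) * pi_kernel h (\<lambda>j. K j + K' j - M j) (\<lambda>j. L j - M j + L' j) N A)"
proof -
  have "(\<Sum>r\<in>wick_support f g. wick_kernel h K L K' L' (fst r) (snd r) * pi_kernel h (fst r) (snd r) N A) =
    (\<Sum>r\<in>wick_support f g. \<Sum>M\<in>{M. M \<le> L \<and> M \<le> K'}. if r = ((\<lambda>j. K j + K' j - M j), (\<lambda>j. L j - M j + L' j))
       then complex_of_real (wick_coeff h L K' M) * pi_kernel h (fst r) (snd r) N A else 0)"
    unfolding wick_kernel_def sum_distrib_right
    by (intro sum.cong refl) (auto simp: prod_eq_iff)
  also have "\<dots> = (\<Sum>M\<in>{M. M \<le> L \<and> M \<le> K'}. \<Sum>r\<in>wick_support f g. if r = ((\<lambda>j. K j + K' j - M j), (\<lambda>j. L j - M j + L' j))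
       then complex_of_real (wick_coeff h L K' M) * pi_kernel h (fst r) (snd r) N A else 0)"
    by (rule sum.swap)
  also have "\<dots> = (\<Sum>M\<in>{M. M \<le> L \<and> M \<le> K'}. complex_of_real (wick_coeff h L K' M) * pi_kernel h (\<lambda>j. K j + K' j - M j) (\<lambda>j. L j - M j + L' j) N A)"
  proof (intro sum.cong refl)
    fix M assume M: "M \<in> {M. M \<le> L \<and> M \<le> K'}"
    have "((\<lambda>j. K j + K' j - M j), (\<lambda>j. L j - M j + L' j)) \<in> wick_support f g"
      unfolding wick_support_def using assms(3,4) M by blast
    then show "(\<Sum>r\<in>wick_support f g. if r = ((\<lambda>j. K j + K' j - M j), (\<lambda>j. L j - M j + L' j))
       then complex_of_real (wick_coeff h L K' M) * pi_kernel h (fst r) (snd r) N A else 0) =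
       complex_of_real (wick_coeff h L K' M) * pi_kernel h (\<lambda>j. K j + K' j - M j) (\<lambda>j. L j - M j + L' j) N A"
      using finite_wick_support[OF assms(1,2)] by (subst sum.delta) auto
  qed
  finally show ?thesis .
qed

lemma sum_pi_support_collapse:
  assumes "fin g" "fin v" "(K',L') \<in> csupp g" "N \<in> csupp v"
  shows "(\<Sum>N'\<in>pi_support g v. pi_kernel h K' L' N N' * pi_kernel h K L N' A) =
    (if L' \<le> N then complex_of_real (h ^ deg L' * (mfact N / mfact (\<lambda>j. N j - L' j))) * pi_kernel h K L (\<lambda>j. K' j + (N j - L' j)) A else 0)"
proof -
  have mem: "(\<lambda>j. K' j + (N j - L' j)) \<in> pi_support g v" unfolding pi_support_def using assms(3,4) by blast
  have fin: "finite (pi_support g v)" using assms(1,2) by (auto simp: pi_support_def)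
  have "(\<Sum>N'\<in>pi_support g v. pi_kernel h K' L' N N' * pi_kernel h K L N' A) =
     (\<Sum>N'\<in>pi_support g v. if N' = (\<lambda>j. K' j + (N j - L' j)) then
        (if L' \<le> N then complex_of_real (h ^ deg L' * (mfact N / mfact (\<lambda>j. N j - L' j))) * pi_kernel h K L N' A else 0) else 0)"
    unfolding pi_kernel_def[of h K' L'] by (intro sum.cong refl) auto
  then show ?thesis using mem fin by (subst (asm) sum.delta) auto
qed

lemma pi_rep_wick_expand:
  assumes f: "fin f" and g: "fin g" and v: "fin v"
  shows "pi_rep h (wick h f g) v A = (\<Sum>p\<in>csupp f. \<Sum>q\<in>csupp g. \<Sum>N\<in>csupp v. f p * g q * v N *
      (\<Sum>M\<in>{M. M \<le> snd p \<and> M \<le> fst q}. complex_of_real (wick_coeff h (snd p) (fst q) M) * pi_kernel h (\<lambda>j. fst p j + fst q j - M j) (\<lambda>j. snd p j - M j + snd q j) N A))"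
proof -
  let ?W = "wick_support f g" and ?F = "csupp f" and ?G = "csupp g" and ?V = "csupp v"
  let ?X = "\<lambda>p q N. f p * g q * v N"
  have "pi_rep h (wick h f g) v A = (\<Sum>r\<in>?W. \<Sum>N\<in>?V. wick h f g r * v N * pi_kernel h (fst r) (snd r) N A)"
    using pi_rep_expand_superset[OF finite_wick_support[OF f g] csupp_wick_subset v order_refl] by (simp add: split_def)
  also have "\<dots> = (\<Sum>r\<in>?W. \<Sum>N\<in>?V. \<Sum>p\<in>?F. \<Sum>q\<in>?G. ?X p q N * (wick_kernel h (fst p) (snd p) (fst q) (snd q) (fst r) (snd r) * pi_kernel h (fst r) (snd r) N A))"
  proof (intro sum.cong refl)
    fix r N
    show "wick h f g r * v N * pi_kernel h (fst r) (snd r) N A = (\<Sum>p\<in>?F. \<Sum>q\<in>?G. ?X p q N * (wick_kernel h (fst p) (snd p) (fst q) (snd q) (fst r) (snd r) * pi_kernel h (fst r) (snd r) N A))"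
      using wick_expand_superset[OF f order_refl g order_refl, of h "fst r" "snd r"]
      by (simp add: split_def sum_distrib_left sum_distrib_right mult_ac)
  qed
  also have "\<dots> = (\<Sum>p\<in>?F. \<Sum>q\<in>?G. \<Sum>N\<in>?V. \<Sum>r\<in>?W. ?X p q N * (wick_kernel h (fst p) (snd p) (fst q) (snd q) (fst r) (snd r) * pi_kernel h (fst r) (snd r) N A))"
    by (rule sum_reorder4)
  also have "\<dots> = (\<Sum>p\<in>?F. \<Sum>q\<in>?G. \<Sum>N\<in>?V. ?X p q N *
      (\<Sum>M\<in>{M. M \<le> snd p \<and> M \<le> fst q}. complex_of_real (wick_coeff h (snd p) (fst q) M) * pi_kernel h (\<lambda>j. fst p j + fst q j - M j) (\<lambda>j. snd p j - M j + snd q j) N A))"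
  proof (intro sum.cong refl)
    fix p q N assume p: "p \<in> ?F" and q: "q \<in> ?G"
    show "(\<Sum>r\<in>?W. ?X p q N * (wick_kernel h (fst p) (snd p) (fst q) (snd q) (fst r) (snd r) * pi_kernel h (fst r) (snd r) N A)) = ?X p q N *
      (\<Sum>M\<in>{M. M \<le> snd p \<and> M \<le> fst q}. complex_of_real (wick_coeff h (snd p) (fst q) M) * pi_kernel h (\<lambda>j. fst p j + fst q j - M j) (\<lambda>j. snd p j - M j + snd q j) N A)"
      using sum_wick_support_collapse[OF f g, of "fst p" "snd p" "fst q" "snd q" h N A] p q
      by (simp add: sum_distrib_left[symmetric])
  qed
  finally show ?thesis .
qed

lemma pi_rep_pi_rep_expand:
  assumes f: "fin f" and g: "fin g" and v: "fin v"
  shows "pi_rep h f (pi_rep h g v) A = (\<Sum>p\<in>csupp f. \<Sum>q\<in>csupp g. \<Sum>N\<in>csupp v. f p * g q * v N *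
      (if snd q \<le> N then complex_of_real (h ^ deg (snd q) * (mfact N / mfact (\<lambda>j. N j - snd q j))) * pi_kernel h (fst p) (snd p) (\<lambda>j. fst q j + (N j - snd q j)) A else 0))"
proof -
  let ?F = "csupp f" and ?G = "csupp g" and ?V = "csupp v"
  let ?X = "\<lambda>p q N. f p * g q * v N"
  have "pi_rep h f (pi_rep h g v) A = (\<Sum>p\<in>?F. \<Sum>N'\<in>pi_support g v. f p * pi_rep h g v N' * pi_kernel h (fst p) (snd p) N' A)"
    using pi_rep_expand_superset[OF f order_refl finite_pi_support[OF g v] csupp_pi_rep_subset[of h g v], of h A]
    by (simp add: split_def)
  also have "\<dots> = (\<Sum>p\<in>?F. \<Sum>N'\<in>pi_support g v. \<Sum>q\<in>?G. \<Sum>N\<in>?V. ?X p q N * (pi_kernel h (fst q) (snd q) N N' * pi_kernel h (fst p) (snd p) N' A))"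
  proof (intro sum.cong refl)
    fix p N'
    show "f p * pi_rep h g v N' * pi_kernel h (fst p) (snd p) N' A = (\<Sum>q\<in>?G. \<Sum>N\<in>?V. ?X p q N * (pi_kernel h (fst q) (snd q) N N' * pi_kernel h (fst p) (snd p) N' A))"
      using pi_rep_expand_superset[OF g order_refl v order_refl, of h N']
      by (simp add: split_def sum_distrib_left sum_distrib_right mult_ac)
  qed
  also have "\<dots> = (\<Sum>p\<in>?F. \<Sum>q\<in>?G. \<Sum>N\<in>?V. \<Sum>N'\<in>pi_support g v. ?X p q N * (pi_kernel h (fst q) (snd q) N N' * pi_kernel h (fst p) (snd p) N' A))"
    by (intro sum.cong refl) (rule sum_rotate3)
  also have "\<dots> = (\<Sum>p\<in>?F. \<Sum>q\<in>?G. \<Sum>N\<in>?V. ?X p q N *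
      (if snd q \<le> N then complex_of_real (h ^ deg (snd q) * (mfact N / mfact (\<lambda>j. N j - snd q j))) * pi_kernel h (fst p) (snd p) (\<lambda>j. fst q j + (N j - snd q j)) A else 0))"
  proof (intro sum.cong refl)
    fix p q N assume q: "q \<in> ?G" and N: "N \<in> ?V"
    show "(\<Sum>N'\<in>pi_support g v. ?X p q N * (pi_kernel h (fst q) (snd q) N N' * pi_kernel h (fst p) (snd p) N' A)) = ?X p q N *
      (if snd q \<le> N then complex_of_real (h ^ deg (snd q) * (mfact N / mfact (\<lambda>j. N j - snd q j))) * pi_kernel h (fst p) (snd p) (\<lambda>j. fst q j + (N j - snd q j)) A else 0)"
      using sum_pi_support_collapse[OF g v, of "fst q" "snd q" N h "fst p" "snd p" A] q N
      by (simp add: sum_distrib_left[symmetric])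
  qed
  finally show ?thesis .
qed

lemma pi_rep_wick:
  assumes "fin f" and "fin g" and "fin v"
  shows "pi_rep h (wick h f g) v = pi_rep h f (pi_rep h g v)"
  by (rule ext) (simp only: pi_rep_wick_expand[OF assms] pi_rep_pi_rep_expand[OF assms] wick_kernel_pi_kernel_sum)

lemma cstar_cstar: "cstar (cstar f) = f" by (auto simp: cstar_def fun_eq_iff)

lemma csupp_cstar: "csupp (cstar f) = prod.swap ` csupp f"
  by (auto simp: csupp_def cstar_def prod.swap_def image_iff)

lemma fin_cstar: "fin f \<Longrightarrow> fin (cstar f)" by (simp add: csupp_cstar)

lemma cstar_add: "cstar (\<lambda>m. f m + g m) = (\<lambda>m. cstar f m + cstar g m)"
  by (auto simp: cstar_def fun_eq_iff)

lemma cstar_scale: "cstar (\<lambda>m. c * f m) = (\<lambda>m. cnj c * cstar f m)"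
  by (auto simp: cstar_def fun_eq_iff)

lemma cstar_monom: "cstar (monom (K, L)) = monom (L, K)"
  by (auto simp: cstar_def monom_def fun_eq_iff)

text \<open>Matrix form of the adjointness of \<open>\<pi>\<^sub>\<hbar>(z^K zbar^L)\<close> and \<open>\<pi>\<^sub>\<hbar>(z^L zbar^K)\<close> for the Fock inner product.\<close>

lemma pi_kernel_adjoint: "pi_kernel h K L N A * fock_weight h A = cnj (pi_kernel h L K A N) * fock_weight h N"
proof (cases "L \<le> N \<and> (\<lambda>j. K j + (N j - L j)) = A")
  case True
  then have LN: "L \<le> N" and AA: "A = (\<lambda>j. K j + (N j - L j))" by auto
  have KA: "K \<le> A" using AA by (auto simp: le_fun_def)
  have NN: "(\<lambda>j. L j + (A j - K j)) = N" using LN AA by (auto simp: le_fun_def fun_eq_iff)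
  have R: "(\<lambda>j. A j - K j) = (\<lambda>j. N j - L j)" using AA by auto
  have dA: "deg A = deg K + (deg N - deg L)" unfolding AA deg_add deg_diff[OF LN] ..
  have dN: "deg L \<le> deg N" using deg_mono[OF LN] .
  have hp: "h ^ deg L * h ^ deg A = h ^ deg K * h ^ deg N"
    using dA dN by (simp add: power_add[symmetric])
  define R' where "R' = (\<lambda>j. N j - L j)"
  have p1: "pi_kernel h K L N A = complex_of_real (h ^ deg L * (mfact N / mfact R'))"
    using True unfolding pi_kernel_def R'_def by simp
  have p2: "pi_kernel h L K A N = complex_of_real (h ^ deg K * (mfact A / mfact R'))"
    using KA NN R unfolding pi_kernel_def R'_def by simp
  have "h ^ deg L * (mfact N / mfact R') * (h ^ deg A * mfact A) = (h ^ deg L * h ^ deg A) * (mfact N * mfact A / mfact R')"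
    by (simp add: mult_ac)
  also have "\<dots> = (h ^ deg K * h ^ deg N) * (mfact N * mfact A / mfact R')" by (simp only: hp)
  also have "\<dots> = h ^ deg K * (mfact A / mfact R') * (h ^ deg N * mfact N)" by (simp add: mult_ac)
  finally have e: "h ^ deg L * (mfact N / mfact R') * (h ^ deg A * mfact A) = h ^ deg K * (mfact A / mfact R') * (h ^ deg N * mfact N)" .
  show ?thesis unfolding p1 p2 fock_weight_def
    by (simp only: complex_cnj_complex_of_real of_real_mult[symmetric] e)
next
  case False
  have "\<not> (K \<le> A \<and> (\<lambda>j. L j + (A j - K j)) = N)"
  proof
    assume a: "K \<le> A \<and> (\<lambda>j. L j + (A j - K j)) = N"
    then have "\<forall>x. K x \<le> A x" "\<forall>x. L x + (A x - K x) = N x" by (auto simp: le_fun_def fun_eq_iff)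
    then have "L \<le> N \<and> (\<lambda>j. K j + (N j - L j)) = A"
      unfolding le_fun_def fun_eq_iff by (metis add_diff_cancel_left' le_add1 le_add_diff_inverse)
    with False show False by simp
  qed
  then have "pi_kernel h L K A N = 0" unfolding pi_kernel_def by (rule if_not_P)
  moreover have "pi_kernel h K L N A = 0" using False unfolding pi_kernel_def by (rule if_not_P)
  ultimately show ?thesis by simp
qed

lemma pi_rep_cstar_expand:
  assumes "fin f" "fin u"
  shows "pi_rep h (cstar f) u N = (\<Sum>p\<in>csupp f. \<Sum>A\<in>csupp u. cnj (f p) * u A * pi_kernel h (snd p) (fst p) A N)"
proof -
  have "pi_rep h (cstar f) u N = (\<Sum>p'\<in>prod.swap ` csupp f. \<Sum>A\<in>csupp u. cstar f p' * u A * pi_kernel h (fst p') (snd p') A N)"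
  proof -
    have fS: "finite (prod.swap ` csupp f)" using assms(1) by simp
    have sS: "csupp (cstar f) \<subseteq> prod.swap ` csupp f" by (simp add: csupp_cstar)
    show ?thesis using pi_rep_expand_superset[OF fS sS assms(2) order_refl, of h N] by (simp add: split_def)
  qed
  also have "\<dots> = (\<Sum>p\<in>csupp f. \<Sum>A\<in>csupp u. cnj (f p) * u A * pi_kernel h (snd p) (fst p) A N)"
    by (subst sum.reindex[OF inj_swap]) (simp add: prod.swap_def cstar_def split_def)
  finally show ?thesis .
qed

lemma fock_inner_pi_rep_adjoint:
  assumes f: "fin f" and u: "fin u" and w: "fin w"
  shows "fock_inner h u (pi_rep h f w) = fock_inner h (pi_rep h (cstar f) u) w"
proof -
  let ?F = "csupp f" and ?U = "csupp u" and ?W = "csupp w"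
  have "fock_inner h u (pi_rep h f w) = (\<Sum>A\<in>?U. cnj (u A) * pi_rep h f w A * fock_weight h A)"
    by (rule fock_inner_expand_superset[OF u Int_lower1])
  also have "\<dots> = (\<Sum>A\<in>?U. \<Sum>p\<in>?F. \<Sum>N\<in>?W. f p * cnj (u A) * w N * (pi_kernel h (fst p) (snd p) N A * fock_weight h A))"
    unfolding pi_rep_expand_superset[OF f order_refl w order_refl]
    by (simp add: split_def sum_distrib_left sum_distrib_right mult_ac)
  also have "\<dots> = (\<Sum>p\<in>?F. \<Sum>A\<in>?U. \<Sum>N\<in>?W. f p * cnj (u A) * w N * (pi_kernel h (fst p) (snd p) N A * fock_weight h A))"
    by (rule sum.swap)
  also have "\<dots> = (\<Sum>p\<in>?F. \<Sum>A\<in>?U. \<Sum>N\<in>?W. f p * cnj (u A) * w N * (cnj (pi_kernel h (snd p) (fst p) A N) * fock_weight h N))"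
    by (simp only: pi_kernel_adjoint)
  also have "\<dots> = (\<Sum>N\<in>?W. \<Sum>p\<in>?F. \<Sum>A\<in>?U. f p * cnj (u A) * w N * (cnj (pi_kernel h (snd p) (fst p) A N) * fock_weight h N))"
    by (rule sum_rotate3[symmetric])
  also have "\<dots> = (\<Sum>N\<in>?W. cnj (pi_rep h (cstar f) u N) * w N * fock_weight h N)"
    unfolding pi_rep_cstar_expand[OF f u]
    by (simp add: cnj_sum sum_distrib_left sum_distrib_right mult_ac)
  also have "\<dots> = fock_inner h (pi_rep h (cstar f) u) w"
    by (rule fock_inner_expand_superset[symmetric, OF w Int_lower2])
  finally show ?thesis .
qed

lemma wick_coeff_commute: "wick_coeff h L K' M = wick_coeff h K' L M"
  by (simp add: wick_coeff_def mult_ac)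

lemma wick_kernel_swap: "wick_kernel h L' K' L K A B = wick_kernel h K L K' L' B A"
  unfolding wick_kernel_def
proof (rule sum.cong)
  show "{M. M \<le> K' \<and> M \<le> L} = {M. M \<le> L \<and> M \<le> K'}" by auto
next
  fix M assume M: "M \<in> {M. M \<le> L \<and> M \<le> K'}"
  have e1: "(\<lambda>j. L' j + L j - M j) = (\<lambda>j. L j - M j + L' j)" using M by (auto simp: le_fun_def fun_eq_iff)
  have e2: "(\<lambda>j. K' j - M j + K j) = (\<lambda>j. K j + K' j - M j)" using M by (auto simp: le_fun_def fun_eq_iff)
  show "(if (\<lambda>j. L' j + L j - M j) = A \<and> (\<lambda>j. K' j - M j + K j) = B then complex_of_real (wick_coeff h K' L M) else 0) =
        (if (\<lambda>j. K j + K' j - M j) = B \<and> (\<lambda>j. L j - M j + L' j) = A then complex_of_real (wick_coeff h L K' M) else 0)"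
    unfolding e1 e2 wick_coeff_commute[of h K' L] by auto
qed

lemma cnj_wick_kernel: "cnj (wick_kernel h K L K' L' A B) = wick_kernel h K L K' L' A B"
  unfolding wick_kernel_def by (simp add: cnj_sum if_distrib cong: if_cong)

lemma cstar_wick:
  assumes a: "fin a" and b: "fin b"
  shows "cstar (wick h a b) = wick h (cstar b) (cstar a)"
proof (rule ext, clarify)
  fix A B
  have "cstar (wick h a b) (A, B) = cnj (wick h a b (B, A))" by (simp add: cstar_def)
  also have "\<dots> = (\<Sum>p\<in>csupp a. \<Sum>q\<in>csupp b. cnj (a p) * cnj (b q) * wick_kernel h (fst p) (snd p) (fst q) (snd q) B A)"
    unfolding wick_expand_superset[OF a order_refl b order_refl] by (simp add: split_def cnj_sum cnj_wick_kernel)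
  also have "\<dots> = (\<Sum>q\<in>csupp b. \<Sum>p\<in>csupp a. cnj (b q) * cnj (a p) * wick_kernel h (snd q) (fst q) (snd p) (fst p) A B)"
    by (subst sum.swap) (simp add: wick_kernel_swap mult_ac)
  also have "\<dots> = wick h (cstar b) (cstar a) (A, B)"
    unfolding wick_expand_superset[OF fin_cstar[OF b] order_refl fin_cstar[OF a] order_refl] csupp_cstar sum.reindex[OF inj_swap]
    by (simp add: prod.swap_def split_def cstar_def)
  finally show "cstar (wick h a b) (A, B) = wick h (cstar b) (cstar a) (A, B)" .
qed

lemma Balg_fin: "f \<in> Balg \<Longrightarrow> fin f" by (simp add: Balg_def)

lemma BalgD: "f \<in> Balg \<Longrightarrow> f (K, L) \<noteq> 0 \<Longrightarrow> deg K = deg L"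
  by (auto simp: Balg_def csupp_def)

lemma BalgI: "fin f \<Longrightarrow> (\<And>K L. f (K, L) \<noteq> 0 \<Longrightarrow> deg K = deg L) \<Longrightarrow> f \<in> Balg"
  by (auto simp: Balg_def csupp_def)

lemma Balg_add: "f \<in> Balg \<Longrightarrow> g \<in> Balg \<Longrightarrow> (\<lambda>m. f m + g m) \<in> Balg"
proof (rule BalgI)
  fix K L assume "f \<in> Balg" "g \<in> Balg" "f (K, L) + g (K, L) \<noteq> 0"
  then show "deg K = deg L" by (metis add_0 BalgD)
qed (auto simp: Balg_fin fin_add)

lemma Balg_scale: "f \<in> Balg \<Longrightarrow> (\<lambda>m. c * f m) \<in> Balg"
  by (rule BalgI) (auto simp: Balg_fin fin_scale dest: BalgD)

lemma Balg_zero: "(\<lambda>_. 0) \<in> Balg"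
  by (rule BalgI) (auto simp: fin_zero)

lemma Balg_sum: "finite I \<Longrightarrow> (\<And>i. i \<in> I \<Longrightarrow> F i \<in> Balg) \<Longrightarrow> (\<lambda>m. \<Sum>i\<in>I. F i m) \<in> Balg"
  by (induction I rule: finite_induct) (auto simp: Balg_zero intro: Balg_add[simplified])

lemma Balg_diff: "f \<in> Balg \<Longrightarrow> g \<in> Balg \<Longrightarrow> (\<lambda>m. f m - g m) \<in> Balg"
  using Balg_add[of f "\<lambda>m. (-1) * g m"] Balg_scale[of g "-1"] by simp

lemma Balg_cstar: "f \<in> Balg \<Longrightarrow> cstar f \<in> Balg"
proof (rule BalgI)
  show "f \<in> Balg \<Longrightarrow> fin (cstar f)" by (simp add: Balg_fin fin_cstar)
qed (auto simp: cstar_def dest: BalgD)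

lemma monom_Balg: "deg K = deg L \<Longrightarrow> monom (K, L) \<in> Balg"
proof (rule BalgI)
  show "fin (monom (K, L))" by (rule fin_monom)
qed (auto simp: monom_def split: if_splits)

lemma Balg_wick:
  assumes a: "a \<in> Balg" and b: "b \<in> Balg"
  shows "wick h a b \<in> Balg"
proof (rule BalgI)
  show "fin (wick h a b)" using a b by (simp add: Balg_fin fin_wick)
next
  fix A B assume "wick h a b (A, B) \<noteq> 0"
  then have "(A, B) \<in> wick_support a b" using csupp_wick_subset[of h a b] by (auto simp: csupp_def)
  then obtain K L K' L' M where p: "(K,L) \<in> csupp a" and q: "(K',L') \<in> csupp b" and M: "M \<le> L" "M \<le> K'"
    and AB: "A = (\<lambda>j. K j + K' j - M j)" "B = (\<lambda>j. L j - M j + L' j)"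
    unfolding wick_support_def by auto
  have d1: "deg K = deg L" using p a by (auto simp: csupp_def dest: BalgD)
  have d2: "deg K' = deg L'" using q b by (auto simp: csupp_def dest: BalgD)
  have M2: "M \<le> (\<lambda>j. K j + K' j)" using M by (auto simp: le_fun_def intro: trans_le_add2)
  have "deg A = deg K + deg K' - deg M" unfolding AB deg_diff[OF M2] deg_add ..
  moreover have "deg B = deg L - deg M + deg L'" unfolding AB deg_add deg_diff[OF M(1)] ..
  moreover have "deg M \<le> deg L" "deg M \<le> deg K'" using deg_mono M by auto
  ultimately show "deg A = deg B" using d1 d2 by simp
qed

lemma one_p_eq_monom: "one_p = monom ((\<lambda>_. 0), (\<lambda>_. 0))"
  by (auto simp: one_p_def monom_def fun_eq_iff)

lemma one_Balg: "one_p \<in> Balg" unfolding one_p_eq_monom by (rule monom_Balg) simp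

lemma wick_monom_monom: "wick h (monom (K, L)) (monom (K', L')) (A, B) = wick_kernel h K L K' L' A B"
  using wick_expand_superset[where h=h and A=A and B=B, OF _ equalityD1[OF csupp_monom] _ equalityD1[OF csupp_monom]]
  by (simp add: monom_def)

lemma wick_coeff_0: "wick_coeff h L K' (\<lambda>_. 0) = 1"
  by (simp add: wick_coeff_def deg_0 mfact_0 mfact_nonzero)

lemma wick_coeff_evec: "1 \<le> L i \<Longrightarrow> wick_coeff h L (evec i) (evec i) = h * real (L i)"
  unfolding wick_coeff_def by (simp add: deg_evec mfact_evec mfact_0 mfact_div_mfact_minus_evec)

lemma le_evec_subindices: "{M. M \<le> L \<and> M \<le> evec i} = (if 1 \<le> L i then {\<lambda>_. 0, evec i} else {\<lambda>_. 0})"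
proof -
  have "(\<lambda>_. 0) \<le> L" by (simp add: le_fun_def)
  moreover have "evec i \<le> L \<longleftrightarrow> 1 \<le> L i"
    using evec_le[of L i] by (auto simp: le_fun_def evec_def dest: spec[of _ i])
  ultimately show ?thesis using le_evec_iff[of _ i] by auto
qed

lemma wick_monom_evec:
  "wick h (monom (K, L)) (monom (evec i, evec j)) =
    (\<lambda>m. monom ((\<lambda>l. K l + evec i l), (\<lambda>l. L l + evec j l)) m
       + complex_of_real (h * real (L i)) * monom (K, (\<lambda>l. L l - evec i l + evec j l)) m)"
proof (rule ext, clarify)
  fix A B :: "'a \<Rightarrow> nat"
  have ne: "(\<lambda>_. 0) \<noteq> evec i" by (auto simp: evec_def fun_eq_iff)
  show "wick h (monom (K, L)) (monom (evec i, evec j)) (A, B) = monom ((\<lambda>l. K l + evec i l), (\<lambda>l. L l + evec j l)) (A, B)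
       + complex_of_real (h * real (L i)) * monom (K, (\<lambda>l. L l - evec i l + evec j l)) (A, B)"
    unfolding wick_monom_monom wick_kernel_def le_evec_subindices
    using ne by (cases "L i = 0") (simp_all add: wick_coeff_0 wick_coeff_evec monom_apply)
qed

lemma J_p_eq_sum_evec: "J_p = (\<lambda>m. \<Sum>i\<in>UNIV. monom (evec i, evec i) m)"
proof (rule ext, clarify)
  fix K L :: "'a \<Rightarrow> nat"
  show "J_p (K, L) = (\<Sum>i\<in>UNIV. monom (evec i, evec i) (K, L))"
  proof (cases "K = L \<and> deg K = 1")
    case True
    then obtain i where "K = evec i" "L = evec i" using deg_eq_1_iff by blast
    then show ?thesis by (simp add: J_p_def monom_def evec_eq_iff deg_evec)
  next
    case False
    then have "monom (evec i, evec i) (K, L) = 0" for i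
      by (auto simp: monom_def deg_evec)
    then show ?thesis using False by (simp add: J_p_def)
  qed
qed

lemma fin_J_p: "fin J_p"
  by (subst J_p_eq_sum_evec) (auto intro!: fin_sum fin_monom)

lemma J_p_Balg: "J_p \<in> Balg"
  by (subst J_p_eq_sum_evec) (auto intro!: Balg_sum monom_Balg)

lemma fin_one_p: "fin one_p"
  by (simp add: one_p_eq_monom fin_monom)

text \<open>Pointwise multiplication by \<open>\<J> = \<Sum>\<^sub>i z\<^sub>i zbar\<^sub>i\<close>, on coefficients.\<close>

definition mulJ :: "'i::finite cpoly \<Rightarrow> 'i cpoly" where
  "mulJ f = (\<lambda>(A, B). \<Sum>i\<in>UNIV. if 1 \<le> A i \<and> 1 \<le> B i then f ((\<lambda>j. A j - evec i j), (\<lambda>j. B j - evec i j)) else 0)"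

lemma mulJ_monom:
  "mulJ (monom (K, L)) = (\<lambda>m. \<Sum>i\<in>UNIV. monom ((\<lambda>l. K l + evec i l), (\<lambda>l. L l + evec i l)) m)"
proof (rule ext, clarify)
  fix A B :: "'a \<Rightarrow> nat"
  have iff: "(1 \<le> A i \<and> 1 \<le> B i \<and> K = (\<lambda>j. A j - evec i j) \<and> L = (\<lambda>j. B j - evec i j)) \<longleftrightarrow>
        ((\<lambda>l. K l + evec i l) = A \<and> (\<lambda>l. L l + evec i l) = B)" for i
    using minus_evec_eq_iff[of A i K] minus_evec_eq_iff[of B i L] by auto
  show "mulJ (monom (K, L)) (A, B) = (\<Sum>i\<in>UNIV. monom ((\<lambda>l. K l + evec i l), (\<lambda>l. L l + evec i l)) (A, B))"
    unfolding mulJ_def monom_apply case_prod_conv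
    by (intro sum.cong refl) (simp only: iff[symmetric] if_bool_eq_conj, auto)
qed

lemma mulJ_expansion:
  assumes f: "fin f"
  shows "mulJ f x = (\<Sum>p\<in>csupp f. f p * mulJ (monom p) x)"
proof -
  obtain A B where x: "x = (A, B)" by (cases x)
  let ?shift = "\<lambda>i. ((\<lambda>j. A j - evec i j), (\<lambda>j. B j - evec i j))"
  have "mulJ f (A, B) = (\<Sum>i\<in>UNIV. if 1 \<le> A i \<and> 1 \<le> B i then (\<Sum>p\<in>csupp f. f p * monom p (?shift i)) else 0)"
    unfolding mulJ_def case_prod_conv by (subst (1) monom_expansion[OF f]) (rule refl)
  also have "\<dots> = (\<Sum>i\<in>UNIV. \<Sum>p\<in>csupp f. f p * (if 1 \<le> A i \<and> 1 \<le> B i then monom p (?shift i) else 0))"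
    by (intro sum.cong refl) auto
  also have "\<dots> = (\<Sum>p\<in>csupp f. f p * (\<Sum>i\<in>UNIV. if 1 \<le> A i \<and> 1 \<le> B i then monom p (?shift i) else 0))"
    by (subst sum.swap) (simp add: sum_distrib_left)
  also have "\<dots> = (\<Sum>p\<in>csupp f. f p * mulJ (monom p) (A, B))"
    unfolding mulJ_def by simp
  finally show ?thesis unfolding x .
qed

lemma fin_mulJ:
  assumes f: "fin f"
  shows "fin (mulJ f)"
proof (rule finite_subset)
  show "csupp (mulJ f) \<subseteq> (\<Union>i. (\<lambda>(K, L). ((\<lambda>j. K j + evec i j), (\<lambda>j. L j + evec i j))) ` csupp f)"
  proof
    fix x assume "x \<in> csupp (mulJ f)"
    then obtain A B where x: "x = (A, B)" and "mulJ f (A, B) \<noteq> 0" by (cases x) (auto simp: csupp_def)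
    then obtain i where i: "1 \<le> A i" "1 \<le> B i" "f ((\<lambda>j. A j - evec i j), (\<lambda>j. B j - evec i j)) \<noteq> 0"
      unfolding mulJ_def by (auto elim: sum.not_neutral_contains_not_neutral split: if_splits)
    have "(\<lambda>j. (A j - evec i j) + evec i j) = A" "(\<lambda>j. (B j - evec i j) + evec i j) = B"
      using minus_evec_eq_iff[of A i "\<lambda>j. A j - evec i j"] minus_evec_eq_iff[of B i "\<lambda>j. B j - evec i j"] i by auto
    then have "x = (\<lambda>(K, L). ((\<lambda>j. K j + evec i j), (\<lambda>j. L j + evec i j))) ((\<lambda>j. A j - evec i j), (\<lambda>j. B j - evec i j))"
      using x by simp
    moreover have "((\<lambda>j. A j - evec i j), (\<lambda>j. B j - evec i j)) \<in> csupp f" using i(3) by (simp add: csupp_def)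
    ultimately show "x \<in> (\<Union>i. (\<lambda>(K, L). ((\<lambda>j. K j + evec i j), (\<lambda>j. L j + evec i j))) ` csupp f)"
      by blast
  qed
qed (use f in auto)

lemma wick_monom_J_p:
  "wick h (monom (K, L)) J_p = (\<lambda>m. mulJ (monom (K, L)) m + complex_of_real (h * real (deg L)) * monom (K, L) m)"
proof -
  have "wick h (monom (K, L)) J_p = (\<lambda>x. \<Sum>i\<in>UNIV. wick h (monom (K, L)) (monom (evec i, evec i)) x)"
    by (subst J_p_eq_sum_evec, rule wick_sum_right) (auto simp: fin_monom)
  also have "\<dots> = (\<lambda>x. \<Sum>i\<in>UNIV. monom ((\<lambda>l. K l + evec i l), (\<lambda>l. L l + evec i l)) x
       + complex_of_real (h * real (L i)) * monom (K, L) x)"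
  proof (rule ext, rule sum.cong[OF refl])
    fix x i
    have "complex_of_real (h * real (L i)) * monom (K, (\<lambda>l. L l - evec i l + evec i l)) x =
          complex_of_real (h * real (L i)) * monom (K, L) x"
      by (cases "L i = 0") (auto simp: evec_def cong: if_cong)
    then show "wick h (monom (K, L)) (monom (evec i, evec i)) x = monom ((\<lambda>l. K l + evec i l), (\<lambda>l. L l + evec i l)) x
       + complex_of_real (h * real (L i)) * monom (K, L) x"
      by (simp add: wick_monom_evec)
  qed
  also have "\<dots> = (\<lambda>m. mulJ (monom (K, L)) m + complex_of_real (h * real (deg L)) * monom (K, L) m)"
    by (simp add: mulJ_monom sum.distrib deg_def sum_distrib_left sum_distrib_right)
  finally show ?thesis .
qed

lemma subindices_0: "{M. M \<le> L \<and> M \<le> (\<lambda>_. 0)} = {(\<lambda>_. 0::nat)}"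
  by (auto simp: le_fun_def fun_eq_iff)

lemma wick_one_right: "fin f \<Longrightarrow> wick h f one_p = f"
proof (rule ext, clarify)
  fix A B :: "'a \<Rightarrow> nat" assume f: "fin f"
  have kernel_0: "wick_kernel h K L (\<lambda>_. 0) (\<lambda>_. 0) A B = (if (K, L) = (A, B) then 1 else 0)" for K L
    unfolding wick_kernel_def subindices_0 by (simp add: wick_coeff_0)
  have "wick h f one_p (A, B) = (\<Sum>p\<in>csupp f. if p = (A, B) then f p else 0)"
    unfolding one_p_eq_monom wick_expand_superset[OF f order_refl fin_monom order_refl] csupp_monom
    by (intro sum.cong) (auto simp: monom_def kernel_0 split: if_splits)
  also have "\<dots> = f (A, B)" using f by (simp add: csupp_def)
  finally show "wick h f one_p (A, B) = f (A, B)" .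
qed

definition J_minus :: "complex \<Rightarrow> 'i::finite cpoly" where
  "J_minus c = (\<lambda>m. J_p m - c * one_p m)"

lemma J_minus_eq: "J_minus c = (\<lambda>m. J_p m + (- c) * one_p m)"
  by (simp add: J_minus_def)

lemma fin_J_minus: "fin (J_minus c)"
  unfolding J_minus_eq by (intro fin_add fin_scale fin_J_p fin_one_p)

lemma J_minus_Balg: "J_minus c \<in> Balg"
  unfolding J_minus_def by (rule Balg_diff[OF J_p_Balg Balg_scale[OF one_Balg]])

lemma cstar_J_p: "cstar J_p = J_p"
proof (rule ext, clarify)
  fix K L :: "'a \<Rightarrow> nat"
  show "cstar J_p (K, L) = J_p (K, L)" by (cases "K = L") (auto simp: cstar_def J_p_def)
qed

lemma cstar_one_p: "cstar one_p = one_p"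
  by (simp add: one_p_eq_monom cstar_monom)

lemma cstar_J_minus: "cstar (J_minus (complex_of_real r)) = J_minus (complex_of_real r)"
  unfolding J_minus_eq cstar_add cstar_scale cstar_J_p cstar_one_p by simp

lemma wick_J_minus:
  assumes f: "fin f"
  shows "wick h f (J_minus c) = (\<lambda>m. wick h f J_p m - c * f m)"
proof -
  have "wick h f (J_minus c) = (\<lambda>m. wick h f J_p m + wick h f (\<lambda>m. (- c) * one_p m) m)"
    unfolding J_minus_eq by (rule wick_add_right[OF f fin_J_p fin_scale[OF fin_one_p]])
  then show ?thesis
    by (simp only: wick_scale_right[OF f fin_one_p] wick_one_right[OF f]) simp
qed

lemma wick_monom_J_minus:
  "wick h (monom (K, L)) (J_minus c) =
    (\<lambda>m. mulJ (monom (K, L)) m + (complex_of_real (h * real (deg L)) - c) * monom (K, L) m)"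
  by (simp add: wick_J_minus fin_monom wick_monom_J_p algebra_simps)

lemma wick_J_minus_homogeneous:
  assumes f: "fin f" and hom: "\<And>K L. f (K, L) \<noteq> 0 \<Longrightarrow> deg L = m"
  shows "wick h f (J_minus c) = (\<lambda>x. mulJ f x + (complex_of_real (h * real m) - c) * f x)"
proof (rule ext)
  fix x
  have "wick h f (J_minus c) x = (\<Sum>p\<in>csupp f. f p * wick h (monom p) (J_minus c) x)"
    by (rule wick_monom_expansion[OF f fin_J_minus])
  also have "\<dots> = (\<Sum>p\<in>csupp f. f p * mulJ (monom p) x + (complex_of_real (h * real m) - c) * (f p * monom p x))"
  proof (intro sum.cong refl)
    fix p assume p: "p \<in> csupp f"
    obtain K L where pKL: "p = (K, L)" by (cases p)
    have "deg L = m" using p hom unfolding pKL csupp_def by auto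
    then show "f p * wick h (monom p) (J_minus c) x = f p * mulJ (monom p) x + (complex_of_real (h * real m) - c) * (f p * monom p x)"
      unfolding pKL by (simp add: wick_monom_J_minus algebra_simps)
  qed
  also have "\<dots> = mulJ f x + (complex_of_real (h * real m) - c) * f x"
    by (subst (3) monom_expansion[OF f]) (simp add: sum.distrib mulJ_expansion[OF f] sum_distrib_left)
  finally show "wick h f (J_minus c) x = mulJ f x + (complex_of_real (h * real m) - c) * f x" .
qed

lemma pi_rep_one_p: "fin v \<Longrightarrow> pi_rep h one_p v = v"
proof (rule ext)
  fix A assume v: "fin v"
  have "pi_rep h one_p v A = (\<Sum>N\<in>csupp v. v N * pi_kernel h (\<lambda>_. 0) (\<lambda>_. 0) N A)"
    unfolding one_p_eq_monom pi_rep_expand_superset[OF fin_monom order_refl v order_refl] csupp_monom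
    by (simp add: monom_def)
  also have "\<dots> = (\<Sum>N\<in>csupp v. if N = A then v N else 0)"
    by (intro sum.cong) (auto simp: pi_kernel_def deg_0 le_fun_def mfact_nonzero)
  also have "\<dots> = v A" using v by (simp add: csupp_def)
  finally show "pi_rep h one_p v A = v A" .
qed

lemma pi_kernel_evec: "pi_kernel h (evec i) (evec i) N A = (if N = A then complex_of_real (h * real (A i)) else 0)"
proof (cases "1 \<le> N i")
  case True
  then have "(\<lambda>j. evec i j + (N j - evec i j)) = N" by (auto simp: evec_def fun_eq_iff)
  moreover have "h ^ deg (evec i) * (mfact N / mfact (\<lambda>j. N j - evec i j)) = h * real (N i)"
    using True by (simp add: deg_evec mfact_div_mfact_minus_evec)
  ultimately show ?thesis
    using True unfolding pi_kernel_def by (auto simp: evec_le simp del: of_real_mult of_real_divide of_real_power)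
next
  case False
  then have "\<not> evec i \<le> N" by (auto simp: le_fun_def evec_def dest: spec[of _ i])
  then show ?thesis using False unfolding pi_kernel_def by auto
qed

lemma pi_rep_monom_evec:
  assumes v: "fin v"
  shows "pi_rep h (monom (evec i, evec i)) v A = complex_of_real (h * real (A i)) * v A"
proof -
  have "pi_rep h (monom (evec i, evec i)) v A = (\<Sum>N\<in>csupp v. v N * pi_kernel h (evec i) (evec i) N A)"
    unfolding pi_rep_expand_superset[OF fin_monom order_refl v order_refl] csupp_monom
    by (simp add: monom_def)
  also have "\<dots> = (\<Sum>N\<in>csupp v. if N = A then complex_of_real (h * real (A i)) * v N else 0)"
    by (intro sum.cong refl) (simp add: pi_kernel_evec)
  also have "\<dots> = complex_of_real (h * real (A i)) * v A" using v by (simp add: csupp_def)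
  finally show ?thesis .
qed

lemma pi_rep_J_p: "fin v \<Longrightarrow> pi_rep h J_p v = (\<lambda>A. complex_of_real (h * real (deg A)) * v A)"
proof -
  assume v: "fin v"
  have "pi_rep h J_p v = (\<lambda>A. \<Sum>i\<in>UNIV. pi_rep h (monom (evec i, evec i)) v A)"
    by (subst J_p_eq_sum_evec, rule pi_rep_sum_left) (auto simp: fin_monom v)
  then show ?thesis
    using v by (simp add: pi_rep_monom_evec deg_def sum_distrib_left sum_distrib_right)
qed

lemma pi_rep_J_minus: "fin v \<Longrightarrow> pi_rep h (J_minus c) v = (\<lambda>A. (complex_of_real (h * real (deg A)) - c) * v A)"
proof -
  assume v: "fin v"
  have "pi_rep h (J_minus c) v = (\<lambda>m. pi_rep h J_p v m + pi_rep h (\<lambda>m. (- c) * one_p m) v m)"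
    unfolding J_minus_eq by (rule pi_rep_add_left[OF fin_J_p fin_scale[OF fin_one_p] v])
  then show ?thesis
    by (simp only: pi_rep_scale_left[OF fin_one_p v] pi_rep_one_p[OF v] pi_rep_J_p[OF v]) (simp add: algebra_simps)
qed

definition homogeneous :: "nat \<Rightarrow> 'i::finite fock \<Rightarrow> bool" where
  "homogeneous k v \<longleftrightarrow> (\<forall>A. v A \<noteq> 0 \<longrightarrow> deg A = k)"

lemma homogeneous_fock_monom: "deg N = k \<Longrightarrow> homogeneous k (fock_monom N)"
  by (simp add: homogeneous_def fock_monom_def)

lemma homogeneous_add_scale: "homogeneous k u \<Longrightarrow> homogeneous k w \<Longrightarrow> homogeneous k (\<lambda>m. u m + c * w m)"
  unfolding homogeneous_def by (metis add.right_neutral mult_zero_right)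

lemma pi_rep_J_minus_homogeneous:
  "fin v \<Longrightarrow> homogeneous k v \<Longrightarrow> pi_rep h (J_minus (complex_of_real (h * real k))) v = (\<lambda>_. 0)"
  by (auto simp: pi_rep_J_minus homogeneous_def fun_eq_iff)

lemma homogeneous_pi_rep:
  assumes f: "f \<in> Balg" and v: "homogeneous k v"
  shows "homogeneous k (pi_rep h f v)"
  unfolding homogeneous_def
proof (intro allI impI)
  fix A assume "pi_rep h f v A \<noteq> 0"
  then obtain p M where p: "p \<in> csupp f" and M: "M \<in> csupp v" and "pi_kernel h (fst p) (snd p) M A \<noteq> 0"
    unfolding pi_rep_expand split_def
    by (auto elim!: sum.not_neutral_contains_not_neutral)
  then have LM: "snd p \<le> M" and AA: "A = (\<lambda>j. fst p j + (M j - snd p j))"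
    unfolding pi_kernel_def by (auto split: if_splits)
  have "deg (fst p) = deg (snd p)" using p f by (cases p) (auto simp: csupp_def dest: BalgD)
  moreover have "deg M = k" using M v by (auto simp: csupp_def homogeneous_def)
  moreover have "deg A = deg (fst p) + (deg M - deg (snd p))" unfolding AA deg_add deg_diff[OF LM] ..
  moreover have "deg (snd p) \<le> deg M" using deg_mono[OF LM] .
  ultimately show "deg A = k" by simp
qed

section \<open>States\<close>

lemma state_add: "is_state h \<omega> \<Longrightarrow> f \<in> Balg \<Longrightarrow> g \<in> Balg \<Longrightarrow> \<omega> (\<lambda>m. f m + g m) = \<omega> f + \<omega> g"
  by (simp add: is_state_def)

lemma state_scale: "is_state h \<omega> \<Longrightarrow> f \<in> Balg \<Longrightarrow> \<omega> (\<lambda>m. c * f m) = c * \<omega> f"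
  by (simp add: is_state_def)

lemma state_hermitian_real: "is_state h \<omega> \<Longrightarrow> f \<in> Balg \<Longrightarrow> cstar f = f \<Longrightarrow> Im (\<omega> f) = 0"
  by (simp add: is_state_def)

lemma state_pos: "is_state h \<omega> \<Longrightarrow> f \<in> pos_cone h \<Longrightarrow> Im (\<omega> f) = 0 \<and> 0 \<le> Re (\<omega> f)"
  by (simp add: is_state_def)

lemma state_zero: "is_state h \<omega> \<Longrightarrow> \<omega> (\<lambda>_. 0) = 0"
  using state_scale[of h \<omega> one_p 0] one_Balg by simp

lemma state_sum:
  assumes st: "is_state h \<omega>"
  shows "finite I \<Longrightarrow> (\<And>i. i \<in> I \<Longrightarrow> F i \<in> Balg) \<Longrightarrow> \<omega> (\<lambda>m. \<Sum>i\<in>I. F i m) = (\<Sum>i\<in>I. \<omega> (F i))"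
proof (induction I rule: finite_induct)
  case empty
  show ?case using state_zero[OF st] by simp
next
  case (insert x I)
  then have "\<omega> (\<lambda>m. F x m + (\<Sum>i\<in>I. F i m)) = \<omega> (F x) + \<omega> (\<lambda>m. \<Sum>i\<in>I. F i m)"
    by (intro state_add[OF st] Balg_sum) auto
  with insert show ?case by simp
qed

definition re_part :: "'i cpoly \<Rightarrow> 'i cpoly" where
  "re_part x = (\<lambda>m. (1/2) * (x m + cstar x m))"

definition im_part :: "'i cpoly \<Rightarrow> 'i cpoly" where
  "im_part x = (\<lambda>m. (- \<i>/2) * (x m - cstar x m))"

lemma re_part_Balg: "x \<in> Balg \<Longrightarrow> re_part x \<in> Balg"
  unfolding re_part_def by (intro Balg_scale Balg_add Balg_cstar)

lemma im_part_Balg: "x \<in> Balg \<Longrightarrow> im_part x \<in> Balg"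
  unfolding im_part_def by (intro Balg_scale Balg_diff Balg_cstar)

lemma cstar_re_part: "cstar (re_part x) = re_part x"
  by (auto simp: re_part_def cstar_def fun_eq_iff algebra_simps)

lemma cstar_im_part: "cstar (im_part x) = im_part x"
  by (auto simp: im_part_def cstar_def fun_eq_iff algebra_simps)

lemma re_im_part_decomp: "x = (\<lambda>m. re_part x m + \<i> * im_part x m)"
  by (auto simp: re_part_def im_part_def fun_eq_iff algebra_simps)

lemma cstar_re_im_part_decomp: "cstar x = (\<lambda>m. re_part x m + (- \<i>) * im_part x m)"
  by (auto simp: re_part_def im_part_def fun_eq_iff algebra_simps)

lemma state_re_im_part:
  assumes st: "is_state h \<omega>" and x: "x \<in> Balg"
  shows "\<omega> x = \<omega> (re_part x) + \<i> * \<omega> (im_part x)" and "\<omega> (cstar x) = \<omega> (re_part x) - \<i> * \<omega> (im_part x)"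
proof -
  have lin: "\<omega> (\<lambda>m. re_part x m + c * im_part x m) = \<omega> (re_part x) + c * \<omega> (im_part x)" for c
    using state_add[OF st re_part_Balg[OF x] Balg_scale[OF im_part_Balg[OF x]]]
      state_scale[OF st im_part_Balg[OF x]] by simp
  show "\<omega> x = \<omega> (re_part x) + \<i> * \<omega> (im_part x)"
    using lin[of "\<i>"] re_im_part_decomp[of x] by metis
  show "\<omega> (cstar x) = \<omega> (re_part x) - \<i> * \<omega> (im_part x)"
    using lin[of "- \<i>"] cstar_re_im_part_decomp[of x] by (metis mult_minus_left diff_conv_add_uminus)
qed

lemma state_cstar:
  assumes st: "is_state h \<omega>" and x: "x \<in> Balg"
  shows "\<omega> (cstar x) = cnj (\<omega> x)"
proof -
  have "Im (\<omega> (re_part x)) = 0" "Im (\<omega> (im_part x)) = 0"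
    using state_hermitian_real[OF st] re_part_Balg[OF x] im_part_Balg[OF x] cstar_re_part cstar_im_part
    by blast+
  then show ?thesis unfolding state_re_im_part[OF st x] by (simp add: complex_eq_iff)
qed

lemma wick_cstar_self_pos_cone:
  assumes h: "0 < h" and y: "y \<in> Balg"
  shows "wick h (cstar y) y \<in> pos_cone h"
proof -
  have fy: "fin y" and fys: "fin (cstar y)" using y by (auto simp: Balg_fin fin_cstar)
  have "wick h (cstar y) y \<in> Balg" by (intro Balg_wick Balg_cstar y)
  moreover have "cstar (wick h (cstar y) y) = wick h (cstar y) y"
    using cstar_wick[OF fys fy] by (simp add: cstar_cstar)
  moreover have "fock_inner h g (pi_rep h (wick h (cstar y) y) g) = fock_inner h (pi_rep h y g) (pi_rep h y g)"
    if g: "fin g" for g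
    using fock_inner_pi_rep_adjoint[OF fys g fin_pi_rep[OF fy g]]
    by (simp add: pi_rep_wick[OF fys fy g] cstar_cstar)
  ultimately show ?thesis unfolding pos_cone_def using fock_inner_self_nonneg[OF h] by auto
qed

lemma state_wick_cstar_add_scale:
  assumes st: "is_state h \<omega>" and y: "y \<in> Balg" and z: "z \<in> Balg"
  shows "\<omega> (wick h (cstar (\<lambda>m. y m + t * z m)) (\<lambda>m. y m + t * z m)) =
    (\<omega> (wick h (cstar y) y) + t * \<omega> (wick h (cstar y) z)) + cnj t * (\<omega> (wick h (cstar z) y) + t * \<omega> (wick h (cstar z) z))"
proof -
  have fy: "fin y" "fin (cstar y)" and fz: "fin z" "fin (cstar z)"
    using y z by (auto simp: Balg_fin fin_cstar)
  have yB: "cstar y \<in> Balg" and zB: "cstar z \<in> Balg" using y z by (auto intro: Balg_cstar)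
  have fX: "fin (\<lambda>m. y m + t * z m)" using fy fz by (intro fin_add fin_scale)
  have "wick h (cstar (\<lambda>m. y m + t * z m)) (\<lambda>m. y m + t * z m) =
     (\<lambda>m. (wick h (cstar y) y m + t * wick h (cstar y) z m) + cnj t * (wick h (cstar z) y m + t * wick h (cstar z) z m))"
    unfolding cstar_add cstar_scale
    by (simp only: wick_add_left[OF fy(2) fin_scale[OF fz(2)] fX] wick_scale_left[OF fz(2) fX]
        wick_add_right[OF fy(2) fy(1) fin_scale[OF fz(1)]] wick_add_right[OF fz(2) fy(1) fin_scale[OF fz(1)]]
        wick_scale_right[OF fy(2) fz(1)] wick_scale_right[OF fz(2) fz(1)])
  moreover have B: "wick h (cstar y) y \<in> Balg" "wick h (cstar y) z \<in> Balg" "wick h (cstar z) y \<in> Balg" "wick h (cstar z) z \<in> Balg"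
    using y z by (auto intro: Balg_wick Balg_cstar)
  ultimately show ?thesis
    using state_add[OF st Balg_add[OF B(1) Balg_scale[OF B(2)]] Balg_scale[OF Balg_add[OF B(3) Balg_scale[OF B(4)]]]]
      state_add[OF st B(1) Balg_scale[OF B(2)]] state_add[OF st B(3) Balg_scale[OF B(4)]]
      state_scale[OF st Balg_add[OF B(3) Balg_scale[OF B(4)]], of "cnj t"] state_scale[OF st] B by simp
qed

lemma Re_linear_bounded_below_eq_0:
  fixes \<sigma> :: complex
  assumes bound: "\<And>t. 0 \<le> c + 2 * Re (t * \<sigma>)"
  shows "\<sigma> = 0"
proof (rule ccontr)
  assume "\<sigma> \<noteq> 0"
  then have sq: "0 < (cmod \<sigma>)\<^sup>2" by simp
  define t where "t = - complex_of_real ((\<bar>c\<bar> + 1) / (2 * (cmod \<sigma>)\<^sup>2)) * cnj \<sigma>"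
  have "cnj \<sigma> * \<sigma> = complex_of_real ((cmod \<sigma>)\<^sup>2)" by (simp only: complex_norm_square mult.commute)
  then have "t * \<sigma> = - complex_of_real ((\<bar>c\<bar> + 1) / (2 * (cmod \<sigma>)\<^sup>2) * (cmod \<sigma>)\<^sup>2)"
    unfolding t_def by (simp only: mult.assoc of_real_mult mult_minus_left)
  also have "\<dots> = - complex_of_real ((\<bar>c\<bar> + 1) / 2)" using sq by simp
  finally have "c + 2 * Re (t * \<sigma>) < 0" by simp
  with bound[of t] show False by simp
qed

lemma state_cauchy_schwarz_zero:
  assumes h: "0 < h" and st: "is_state h \<omega>" and y: "y \<in> Balg" and z: "z \<in> Balg"
    and zz: "\<omega> (wick h (cstar z) z) = 0"
  shows "\<omega> (wick h (cstar y) z) = 0"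
proof (rule Re_linear_bounded_below_eq_0)
  fix t
  let ?\<sigma> = "\<omega> (wick h (cstar y) z)"
  have "cstar (wick h (cstar y) z) = wick h (cstar z) y"
    using cstar_wick[of "cstar y" z h] y z by (simp add: Balg_fin fin_cstar cstar_cstar)
  then have zy: "\<omega> (wick h (cstar z) y) = cnj ?\<sigma>"
    using state_cstar[OF st Balg_wick[where h=h, OF Balg_cstar[OF y] z]] by simp
  have "(\<lambda>m. y m + t * z m) \<in> Balg" using y z by (intro Balg_add Balg_scale)
  then have "0 \<le> Re (\<omega> (wick h (cstar (\<lambda>m. y m + t * z m)) (\<lambda>m. y m + t * z m)))"
    using state_pos[OF st wick_cstar_self_pos_cone[OF h]] by blast
  also have "\<dots> = Re (\<omega> (wick h (cstar y) y)) + 2 * Re (t * ?\<sigma>)"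
    unfolding state_wick_cstar_add_scale[OF st y z] zy zz by simp
  finally show "0 \<le> Re (\<omega> (wick h (cstar y) y)) + 2 * Re (t * ?\<sigma>)" .
qed

section \<open>Vector states and the kernel of \<open>\<pi>\<^sub>\<hbar>\<close> on degree \<open>k\<close>\<close>

definition vector_state :: "real \<Rightarrow> 'i::finite fock \<Rightarrow> 'i cpoly \<Rightarrow> complex" where
  "vector_state h v f = fock_inner h v (pi_rep h f v) / complex_of_real (fock_sqnorm h v)"

lemma hermitian_fock_form_real:
  assumes "fin f" "cstar f = f" "fin v"
  shows "Im (fock_inner h v (pi_rep h f v)) = 0"
proof -
  have "fock_inner h v (pi_rep h f v) = cnj (fock_inner h v (pi_rep h f v))"
    using fock_inner_pi_rep_adjoint[OF assms(1,3,3)] fock_inner_commute assms(2) by metis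
  then show ?thesis by (metis cnj.simps(2) neg_equal_zero)
qed

lemma is_state_vector_state:
  assumes h: "0 < h" and v: "fin v" and A: "v A \<noteq> 0"
  shows "is_state h (vector_state h v)"
  unfolding is_state_def
proof (intro conjI ballI allI impI)
  have r: "0 < fock_sqnorm h v" by (rule fock_sqnorm_pos[OF h v A])
  show "vector_state h v (\<lambda>m. f m + g m) = vector_state h v f + vector_state h v g" if "f \<in> Balg" "g \<in> Balg" for f g
    using that unfolding vector_state_def
    by (simp add: pi_rep_add_left Balg_fin v fock_inner_add_right fin_pi_rep add_divide_distrib)
  show "vector_state h v (\<lambda>m. c * f m) = c * vector_state h v f" if "f \<in> Balg" for f c
    using that unfolding vector_state_def by (simp add: pi_rep_scale_left Balg_fin v fock_inner_scale_right fin_pi_rep)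
  show "vector_state h v one_p = 1"
    unfolding vector_state_def pi_rep_one_p[OF v] fock_inner_self_eq using r by simp
  show "Im (vector_state h v f) = 0" if "f \<in> Balg" "cstar f = f" for f
    using hermitian_fock_form_real[OF Balg_fin[OF that(1)] that(2) v] unfolding vector_state_def by simp
  show "Im (vector_state h v f) = 0" "0 \<le> Re (vector_state h v f)" if "f \<in> pos_cone h" for f
    using that v r unfolding vector_state_def pos_cone_def by auto
qed

definition level_state :: "real \<Rightarrow> real \<Rightarrow> ('i::finite cpoly \<Rightarrow> complex) \<Rightarrow> bool" where
  "level_state h \<mu> \<omega> \<longleftrightarrow> is_state h \<omega> \<and>
     \<omega> (wick h (J_minus (complex_of_real \<mu>)) (J_minus (complex_of_real \<mu>))) = 0"

lemma level_state_vector_state: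
  assumes h: "0 < h" and v: "fin v" "homogeneous k v" and A: "v A \<noteq> 0"
  shows "level_state h (h * real k) (vector_state h v)"
proof -
  have "pi_rep h (wick h (J_minus (complex_of_real (h * real k))) (J_minus (complex_of_real (h * real k)))) v = (\<lambda>_. 0)"
    by (simp only: pi_rep_wick[OF fin_J_minus fin_J_minus v(1)] pi_rep_J_minus_homogeneous[OF v] pi_rep_zero_right)
  then show ?thesis
    unfolding level_state_def using is_state_vector_state[OF h v(1) A]
    by (simp add: vector_state_def fock_inner_zero_right)
qed

lemma fock_form_polarization:
  assumes f: "fin f" and u: "fin u" and w: "fin w"
    and Z: "\<And>x. fin x \<Longrightarrow> homogeneous k x \<Longrightarrow> fock_inner h x (pi_rep h f x) = 0"
    and du: "homogeneous k u" and dw: "homogeneous k w"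
  shows "fock_inner h u (pi_rep h f w) = 0"
proof -
  let ?Q = "\<lambda>a b. fock_inner h a (pi_rep h f b)"
  have fpu: "fin (pi_rep h f u)" and fpw: "fin (pi_rep h f w)" using f u w by (auto intro: fin_pi_rep)
  have expand: "?Q (\<lambda>m. u m + c * w m) (\<lambda>m. u m + c * w m) = ?Q u u + c * ?Q u w + cnj c * ?Q w u + cnj c * c * ?Q w w" for c
  proof -
    have fcw: "fin (\<lambda>m. c * w m)" using w by (rule fin_scale)
    have "pi_rep h f (\<lambda>m. u m + c * w m) = (\<lambda>m. pi_rep h f u m + c * pi_rep h f w m)"
      by (simp only: pi_rep_add_right[OF f u fcw] pi_rep_scale_right[OF f w])
    moreover have "fock_inner h (\<lambda>m. u m + c * w m) (\<lambda>m. pi_rep h f u m + c * pi_rep h f w m) =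
        fock_inner h u (\<lambda>m. pi_rep h f u m + c * pi_rep h f w m) + cnj c * fock_inner h w (\<lambda>m. pi_rep h f u m + c * pi_rep h f w m)"
      using fock_inner_add_left[OF u fcw fin_add[OF fpu fin_scale[OF fpw]]] fock_inner_scale_left[OF fin_add[OF fpu fin_scale[OF fpw]]] by simp
    moreover have "fock_inner h a (\<lambda>m. pi_rep h f u m + c * pi_rep h f w m) = ?Q a u + c * ?Q a w" if "fin a" for a
      using fock_inner_add_right[OF that fpu fin_scale[OF fpw]] fock_inner_scale_right[OF that] by simp
    ultimately show ?thesis using u w by (simp add: algebra_simps)
  qed
  have z: "?Q (\<lambda>m. u m + c * w m) (\<lambda>m. u m + c * w m) = 0" for c
    using Z[OF fin_add[OF u fin_scale[OF w]] homogeneous_add_scale[OF du dw]] .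
  have "?Q u w + ?Q w u = 0" using expand[of 1] z[of 1] Z[OF u du] Z[OF w dw] by simp
  moreover have "\<i> * ?Q u w - \<i> * ?Q w u = 0" using expand[of "\<i>"] z[of "\<i>"] Z[OF u du] Z[OF w dw] by simp
  ultimately show ?thesis by (simp add: algebra_simps)
qed

definition vanishes_on_level :: "real \<Rightarrow> nat \<Rightarrow> 'i::finite cpoly \<Rightarrow> bool" where
  "vanishes_on_level h k f \<longleftrightarrow> (\<forall>N. deg N = k \<longrightarrow> pi_rep h f (fock_monom N) = (\<lambda>_. 0))"

lemma vanishes_on_level_if_level_states_vanish:
  assumes h: "0 < h" and f: "f \<in> Balg"
    and vanish: "\<And>\<omega>. level_state h (h * real k) \<omega> \<Longrightarrow> \<omega> f = 0"
  shows "vanishes_on_level h k f"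
  unfolding vanishes_on_level_def
proof (intro allI impI ext)
  fix N A :: "'a \<Rightarrow> nat" assume N: "deg N = k"
  have Z: "fock_inner h x (pi_rep h f x) = 0" if x: "fin x" "homogeneous k x" for x
  proof (cases "x = (\<lambda>_. 0)")
    case False
    then obtain A where A: "x A \<noteq> 0" by auto
    have "vector_state h x f = 0" by (rule vanish[OF level_state_vector_state[OF h x A]])
    moreover have "fock_sqnorm h x \<noteq> 0" using fock_sqnorm_pos[OF h x(1) A] by simp
    ultimately show ?thesis unfolding vector_state_def by simp
  qed (simp add: fock_inner_zero_left)
  show "pi_rep h f (fock_monom N) A = 0"
  proof (cases "deg A = k")
    case True
    have "fock_inner h (fock_monom A) (pi_rep h f (fock_monom N)) = 0"
      using fock_form_polarization[OF Balg_fin[OF f] fin_fock_monom fin_fock_monom Z]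
      by (simp add: homogeneous_fock_monom True N)
    then show ?thesis unfolding fock_inner_fock_monom using fock_weight_nonzero[OF h, of A] by simp
  next
    case False
    then show ?thesis
      using homogeneous_pi_rep[OF f homogeneous_fock_monom[OF N], of h] unfolding homogeneous_def by auto
  qed
qed

section \<open>Level states vanish on monomials of degree \<open>> k\<close>\<close>

lemma level_state_is_state: "level_state h \<mu> \<omega> \<Longrightarrow> is_state h \<omega>"
  by (simp add: level_state_def)

lemma level_state_wick_J_minus:
  assumes h: "0 < h" and r: "level_state h \<mu> \<omega>" and x: "x \<in> Balg"
  shows "\<omega> (wick h x (J_minus (complex_of_real \<mu>))) = 0"
proof -
  have "\<omega> (wick h (cstar (J_minus (complex_of_real \<mu>))) (J_minus (complex_of_real \<mu>))) = 0"
    using r unfolding level_state_def cstar_J_minus by blast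
  from state_cauchy_schwarz_zero[OF h level_state_is_state[OF r] Balg_cstar[OF x] J_minus_Balg this]
  show ?thesis by (simp add: cstar_cstar)
qed

text \<open>Pointwise (not Wick) powers of \<open>\<J>\<close>.\<close>

primrec Jpow :: "nat \<Rightarrow> 'i::finite cpoly" where
  "Jpow 0 = one_p"
| "Jpow (Suc m) = mulJ (Jpow m)"

definition diag_positive :: "nat \<Rightarrow> 'i::finite cpoly \<Rightarrow> bool" where
  "diag_positive m f \<longleftrightarrow> fin f \<and> (\<forall>K L. f (K, L) \<noteq> 0 \<longrightarrow> K = L \<and> deg K = m) \<and>
      (\<forall>A. deg A = m \<longrightarrow> Im (f (A, A)) = 0 \<and> 0 < Re (f (A, A)))"

lemma mulJ_nonzeroD:
  assumes "mulJ f (K, L) \<noteq> 0"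
  shows "\<exists>i. 1 \<le> K i \<and> 1 \<le> L i \<and> f ((\<lambda>j. K j - evec i j), (\<lambda>j. L j - evec i j)) \<noteq> 0"
proof -
  from assms obtain i where "(if 1 \<le> K i \<and> 1 \<le> L i then f ((\<lambda>j. K j - evec i j), (\<lambda>j. L j - evec i j)) else 0) \<noteq> 0"
    unfolding mulJ_def case_prod_conv by (rule sum.not_neutral_contains_not_neutral)
  then show ?thesis by (auto split: if_splits)
qed

lemma diag_positive_mulJ:
  assumes f: "diag_positive m f"
  shows "diag_positive (Suc m) (mulJ f)"
proof -
  have sup: "\<And>K L. f (K, L) \<noteq> 0 \<Longrightarrow> K = L \<and> deg K = m"
    and pos: "\<And>A. deg A = m \<Longrightarrow> Im (f (A, A)) = 0 \<and> 0 < Re (f (A, A))"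
    using f unfolding diag_positive_def by blast+
  have "K = L \<and> deg K = Suc m" if nz: "mulJ f (K, L) \<noteq> 0" for K L
  proof -
    obtain i where i: "1 \<le> K i" "1 \<le> L i" "f ((\<lambda>j. K j - evec i j), (\<lambda>j. L j - evec i j)) \<noteq> 0"
      using mulJ_nonzeroD[OF nz] by blast
    from sup[OF i(3)] have eq: "(\<lambda>j. K j - evec i j) = (\<lambda>j. L j - evec i j)"
      and d: "deg (\<lambda>j. K j - evec i j) = m" by auto
    have "(\<lambda>j. (K j - evec i j) + evec i j) = K" "(\<lambda>j. (L j - evec i j) + evec i j) = L"
      using minus_evec_eq_iff[of K i "\<lambda>j. K j - evec i j"] minus_evec_eq_iff[of L i "\<lambda>j. L j - evec i j"] i
      by auto
    with eq have "K = L" by metis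
    moreover have "deg K = Suc m"
      using d deg_minus_evec[of K i, OF i(1)] deg_mono[OF evec_le[of K i, OF i(1)]] by (simp add: deg_evec)
    ultimately show ?thesis ..
  qed
  moreover have "Im (mulJ f (A, A)) = 0 \<and> 0 < Re (mulJ f (A, A))" if d: "deg A = Suc m" for A
  proof -
    let ?t = "\<lambda>i. if 1 \<le> A i \<and> 1 \<le> A i then f ((\<lambda>j. A j - evec i j), (\<lambda>j. A j - evec i j)) else 0"
    have dm: "deg (\<lambda>j. A j - evec i j) = m" if "1 \<le> A i" for i
      using deg_minus_evec[of A i] that d by simp
    have t: "Im (?t i) = 0 \<and> 0 \<le> Re (?t i)" for i
      using pos[OF dm] by (auto simp: less_imp_le)
    obtain i where "A i \<noteq> 0" using d deg_eq_0_iff[of A] by (auto simp: fun_eq_iff)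
    then have "0 < Re (?t i)" using pos[OF dm] by simp
    then have "0 < (\<Sum>i\<in>UNIV. Re (?t i))" by (intro sum_pos2[where i=i]) (use t in auto)
    then show ?thesis unfolding mulJ_def case_prod_conv Re_sum Im_sum using t by simp
  qed
  ultimately show ?thesis
    using f fin_mulJ unfolding diag_positive_def by blast
qed

lemma diag_positive_Jpow: "diag_positive m (Jpow m)"
proof (induction m)
  case 0
  show ?case
    unfolding diag_positive_def using fin_one_p by (auto simp: one_p_def deg_0 deg_eq_0_iff split: if_splits)
next
  case (Suc m)
  then show ?case by (simp add: diag_positive_mulJ)
qed

lemma diag_positive_Balg: "diag_positive m f \<Longrightarrow> f \<in> Balg"
  unfolding diag_positive_def by (auto intro!: BalgI)

lemma level_state_Jpow_Suc:
  assumes h: "0 < h" and r: "level_state h \<mu> \<omega>"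
  shows "\<omega> (Jpow (Suc m)) = complex_of_real (\<mu> - h * real m) * \<omega> (Jpow m)"
proof -
  have st: "is_state h \<omega>" using level_state_is_state[OF r] .
  let ?c = "complex_of_real (h * real m) - complex_of_real \<mu>"
  have B: "Jpow m \<in> Balg" by (rule diag_positive_Balg[OF diag_positive_Jpow])
  have B': "Jpow (Suc m) \<in> Balg" by (rule diag_positive_Balg[OF diag_positive_Jpow])
  have eq: "wick h (Jpow m) (J_minus (complex_of_real \<mu>)) = (\<lambda>x. Jpow (Suc m) x + ?c * Jpow m x)"
    using wick_J_minus_homogeneous[of "Jpow m" m h "complex_of_real \<mu>"] diag_positive_Jpow[of m]
    unfolding diag_positive_def Jpow.simps by blast
  have "\<omega> (wick h (Jpow m) (J_minus (complex_of_real \<mu>))) = \<omega> (Jpow (Suc m)) + ?c * \<omega> (Jpow m)"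
    unfolding eq by (simp only: state_add[OF st B' Balg_scale[OF B]] state_scale[OF st B])
  then show ?thesis using level_state_wick_J_minus[OF h r B] by (simp add: algebra_simps)
qed

lemma level_state_Jpow:
  assumes h: "0 < h" and r: "level_state h (h * real k) \<omega>" and m: "k < m"
  shows "\<omega> (Jpow m) = 0"
  using m
proof (induction m)
  case (Suc m)
  then show ?case
    unfolding level_state_Jpow_Suc[OF h r] by (cases "m = k") auto
qed simp

lemma state_monom_expansion:
  assumes st: "is_state h \<omega>" and f: "f \<in> Balg"
  shows "\<omega> f = (\<Sum>p\<in>csupp f. f p * \<omega> (monom p))"
proof -
  have B: "monom p \<in> Balg" if "p \<in> csupp f" for p
  proof -
    obtain K L where p: "p = (K, L)" by (cases p)
    then have "deg K = deg L" using that f BalgD[of f K L] by (simp add: csupp_def)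
    then show ?thesis unfolding p by (rule monom_Balg)
  qed
  have "\<omega> f = \<omega> (\<lambda>x. \<Sum>p\<in>csupp f. f p * monom p x)"
    by (subst monom_expansion[OF Balg_fin[OF f]]) (rule refl)
  also have "\<dots> = (\<Sum>p\<in>csupp f. f p * \<omega> (monom p))"
    using state_sum[OF st Balg_fin[OF f], of "\<lambda>p x. f p * monom p x"] state_scale[OF st B] Balg_scale[OF B]
    by simp
  finally show ?thesis .
qed

lemma sum_pos_mult_nonneg_eq_0:
  fixes a b :: "'a \<Rightarrow> complex"
  assumes S: "finite S" and sum: "(\<Sum>p\<in>S. a p * b p) = 0"
    and a: "\<And>p. p \<in> S \<Longrightarrow> Im (a p) = 0 \<and> 0 < Re (a p)"
    and b: "\<And>p. p \<in> S \<Longrightarrow> Im (b p) = 0 \<and> 0 \<le> Re (b p)"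
    and q: "q \<in> S"
  shows "b q = 0"
proof -
  have Re_term: "Re (a p * b p) = Re (a p) * Re (b p)" "0 \<le> Re (a p) * Re (b p)" if "p \<in> S" for p
    using a[OF that] b[OF that] by simp_all
  have "(\<Sum>p\<in>S. Re (a p) * Re (b p)) = Re (\<Sum>p\<in>S. a p * b p)"
    unfolding Re_sum by (rule sum.cong[OF refl]) (rule Re_term(1)[symmetric])
  then have "(\<Sum>p\<in>S. Re (a p) * Re (b p)) = 0" using sum by simp
  then have "Re (a q) * Re (b q) = 0" using sum_nonneg_eq_0_iff[OF S Re_term(2)] q by simp
  then show ?thesis using a[OF q] b[OF q] by (simp add: complex_eq_iff)
qed

lemma monom_eq_wick_factors: "monom (K, L) = wick h (monom (K, (\<lambda>_. 0))) (monom ((\<lambda>_. 0), L))"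
proof (rule ext, clarify)
  fix A B :: "'a \<Rightarrow> nat"
  show "monom (K, L) (A, B) = wick h (monom (K, (\<lambda>_. 0))) (monom ((\<lambda>_. 0), L)) (A, B)"
    unfolding wick_monom_monom wick_kernel_def subindices_0 by (simp add: wick_coeff_0 monom_apply)
qed

lemma fock_form_pi_rep_monom:
  assumes v: "fin v"
  shows "fock_inner h v (pi_rep h (monom (K, L)) v) =
     fock_inner h (pi_rep h (monom ((\<lambda>_. 0), K)) v) (pi_rep h (monom ((\<lambda>_. 0), L)) v)"
proof -
  have "pi_rep h (monom (K, L)) v = pi_rep h (monom (K, (\<lambda>_. 0))) (pi_rep h (monom ((\<lambda>_. 0), L)) v)"
    by (subst monom_eq_wick_factors[where h = h]) (rule pi_rep_wick[OF fin_monom fin_monom v])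
  then show ?thesis
    using fock_inner_pi_rep_adjoint[OF fin_monom v fin_pi_rep[OF fin_monom v]] by (simp add: cstar_monom)
qed

lemma monom_diag_pos_cone: "0 < h \<Longrightarrow> monom (A, A) \<in> pos_cone h"
  unfolding pos_cone_def
  by (auto simp: monom_Balg cstar_monom fock_form_pi_rep_monom fock_inner_self_nonneg)

lemma level_state_monom_diag:
  assumes h: "0 < h" and r: "level_state h (h * real k) \<omega>" and km: "k < deg A"
  shows "\<omega> (monom (A, A)) = 0"
proof -
  let ?f = "Jpow (deg A) :: 'a cpoly"
  have st: "is_state h \<omega>" by (rule level_state_is_state[OF r])
  have f: "diag_positive (deg A) ?f" by (rule diag_positive_Jpow)
  then have fin: "finite (csupp ?f)"
    and diag: "\<And>p. p \<in> csupp ?f \<Longrightarrow> fst p = snd p \<and> deg (fst p) = deg A"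
    and pos: "\<And>B. deg B = deg A \<Longrightarrow> Im (?f (B, B)) = 0 \<and> 0 < Re (?f (B, B))"
    unfolding diag_positive_def csupp_def by auto
  have A: "(A, A) \<in> csupp ?f" using pos[of A] by (auto simp: csupp_def)
  show ?thesis
  proof (rule sum_pos_mult_nonneg_eq_0[where a = ?f and b = "\<lambda>p. \<omega> (monom p)", OF fin _ _ _ A])
    show "(\<Sum>p\<in>csupp ?f. ?f p * \<omega> (monom p)) = 0"
      using level_state_Jpow[OF h r km] state_monom_expansion[OF st diag_positive_Balg[OF f]] by simp
  next
    fix p assume "p \<in> csupp ?f"
    with diag obtain B where p: "p = (B, B)" "deg B = deg A" by (metis prod.collapse)
    show "Im (?f p) = 0 \<and> 0 < Re (?f p)" using pos[OF p(2)] unfolding p(1) .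
    show "Im (\<omega> (monom p)) = 0 \<and> 0 \<le> Re (\<omega> (monom p))"
      unfolding p(1) by (rule state_pos[OF st monom_diag_pos_cone[OF h]])
  qed
qed

lemma monom_pair_pos_cone:
  assumes h: "0 < h" and d: "deg K = deg L" and t: "cnj t * t = 1"
  shows "(\<lambda>m. (monom (K, K) m + monom (L, L) m) + (t * monom (K, L) m + cnj t * monom (L, K) m)) \<in> pos_cone h"
    (is "?e \<in> _")
  unfolding pos_cone_def
proof (intro CollectI conjI allI impI)
  show "?e \<in> Balg" using d by (intro Balg_add Balg_scale monom_Balg) auto
  show "cstar ?e = ?e"
    unfolding cstar_add cstar_scale cstar_monom by (simp add: algebra_simps)
  fix g :: "'a fock" assume g: "fin g"
  let ?a = "pi_rep h (monom ((\<lambda>_. 0), K)) g" and ?b = "pi_rep h (monom ((\<lambda>_. 0), L)) g"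
  have fa: "fin ?a" and fb: "fin ?b" and fm: "\<And>p. fin (pi_rep h (monom p) g)"
    using g by (auto intro: fin_pi_rep fin_monom)
  have "fock_inner h g (pi_rep h ?e g) =
     (fock_inner h ?a ?a + fock_inner h ?b ?b) + (t * fock_inner h ?a ?b + cnj t * fock_inner h ?b ?a)"
    by (simp add: pi_rep_add_left pi_rep_scale_left fin_add fin_scale fin_monom g fm
        fock_inner_add_right fock_inner_scale_right fock_form_pi_rep_monom)
  also have "\<dots> = fock_inner h (\<lambda>x. ?a x + t * ?b x) (\<lambda>x. ?a x + t * ?b x)"
    using t by (simp add: fock_inner_add_left fock_inner_add_right fock_inner_scale_left fock_inner_scale_right
        fa fb fin_add fin_scale algebra_simps)
  finally show "Im (fock_inner h g (pi_rep h ?e g)) = 0" "0 \<le> Re (fock_inner h g (pi_rep h ?e g))"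
    using fock_inner_self_nonneg[OF h] by auto
qed

lemma level_state_monom_high:
  assumes h: "0 < h" and r: "level_state h (h * real k) \<omega>" and km: "k < deg K" and d: "deg K = deg L"
  shows "\<omega> (monom (K, L)) = 0"
proof -
  have st: "is_state h \<omega>" by (rule level_state_is_state[OF r])
  have B: "monom (K, K) \<in> Balg" "monom (L, L) \<in> Balg" "monom (K, L) \<in> Balg" "monom (L, K) \<in> Balg"
    using d by (auto intro: monom_Balg)
  have "\<omega> (monom (K, K)) = 0" "\<omega> (monom (L, L)) = 0"
    using level_state_monom_diag[OF h r] km d by simp_all
  then have ew: "\<omega> (\<lambda>m. (monom (K, K) m + monom (L, L) m) + (t * monom (K, L) m + cnj t * monom (L, K) m))
      = t * \<omega> (monom (K, L)) + cnj t * \<omega> (monom (L, K))" for t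
    using state_add[OF st Balg_add[OF B(1,2)] Balg_add[OF Balg_scale[OF B(3)] Balg_scale[OF B(4)]]]
      state_add[OF st B(1,2)] state_add[OF st Balg_scale[OF B(3)] Balg_scale[OF B(4)]]
      state_scale[OF st B(3)] state_scale[OF st B(4)] by simp
  note pos = state_pos[OF st monom_pair_pos_cone[OF h d], unfolded ew]
  let ?x = "\<omega> (monom (K, L))" and ?y = "\<omega> (monom (L, K))"
  have "Im (?x + ?y) = 0 \<and> 0 \<le> Re (?x + ?y)" using pos[of 1] by simp
  moreover have "0 \<le> Re (- ?x - ?y)" using pos[of "-1"] by simp
  moreover have "Im (\<i> * ?x - \<i> * ?y) = 0 \<and> 0 \<le> Re (\<i> * ?x - \<i> * ?y)" using pos[of "\<i>"] by simp
  moreover have "0 \<le> Re (- \<i> * ?x + \<i> * ?y)" using pos[of "- \<i>"] by simp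
  ultimately show ?thesis by (simp add: complex_eq_iff)
qed

section \<open>The kernel of \<open>\<pi>\<^sub>\<hbar>\<close> on degree \<open>k\<close> is a \<open>*\<close>-ideal\<close>

lemma Pkl_zero: "(\<lambda>_. 0) \<in> Pkl k l"
  by (simp add: Pkl_def csupp_def)

lemma Pkl_add: "f \<in> Pkl k l \<Longrightarrow> g \<in> Pkl k l \<Longrightarrow> (\<lambda>m. f m + g m) \<in> Pkl k l"
  unfolding Pkl_def using csupp_add[of f g] by (auto intro: finite_subset)

lemma Pkl_scale: "f \<in> Pkl k l \<Longrightarrow> (\<lambda>m. c * f m) \<in> Pkl k l"
  unfolding Pkl_def using csupp_scale[of c f] by (auto intro: finite_subset)

lemma Pkl_sum: "finite I \<Longrightarrow> (\<And>i. i \<in> I \<Longrightarrow> F i \<in> Pkl k l) \<Longrightarrow> (\<lambda>m. \<Sum>i\<in>I. F i m) \<in> Pkl k l"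
  by (induction I rule: finite_induct) (auto simp: Pkl_zero intro: Pkl_add[simplified])

lemma Pkl_monom: "deg K = k \<Longrightarrow> deg L = l \<Longrightarrow> monom (K, L) \<in> Pkl k l"
  by (auto simp: Pkl_def fin_monom csupp_monom)

lemma Pkl_Balg: "f \<in> Pkl k k \<Longrightarrow> f \<in> Balg"
  by (auto simp: Pkl_def Balg_def)

lemma star_ideal_zero: "is_star_ideal h I \<Longrightarrow> (\<lambda>_. 0) \<in> I"
  by (simp add: is_star_ideal_def)

lemma star_ideal_add: "is_star_ideal h I \<Longrightarrow> f \<in> I \<Longrightarrow> g \<in> I \<Longrightarrow> (\<lambda>m. f m + g m) \<in> I"
  by (simp add: is_star_ideal_def)

lemma star_ideal_scale: "is_star_ideal h I \<Longrightarrow> f \<in> I \<Longrightarrow> (\<lambda>m. c * f m) \<in> I"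
  by (simp add: is_star_ideal_def)

lemma star_ideal_wick_left: "is_star_ideal h I \<Longrightarrow> a \<in> Balg \<Longrightarrow> f \<in> I \<Longrightarrow> wick h a f \<in> I"
  by (simp add: is_star_ideal_def)

lemma star_ideal_wick_right: "is_star_ideal h I \<Longrightarrow> a \<in> Balg \<Longrightarrow> f \<in> I \<Longrightarrow> wick h f a \<in> I"
  by (simp add: is_star_ideal_def)

definition level_kernel :: "real \<Rightarrow> nat \<Rightarrow> 'i::finite cpoly set" where
  "level_kernel h k = {f \<in> Balg. vanishes_on_level h k f}"

lemma vanishes_on_level_homogeneous:
  assumes f: "fin f" and kf: "vanishes_on_level h k f" and v: "fin v" and dv: "homogeneous k v"
  shows "pi_rep h f v = (\<lambda>_. 0)"
proof (rule ext)
  fix A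
  have "pi_rep h f v A = (\<Sum>p\<in>csupp f. \<Sum>N\<in>csupp v. f p * v N * pi_kernel h (fst p) (snd p) N A)"
    by (simp add: pi_rep_expand_superset[OF f order_refl v order_refl] split_def)
  also have "\<dots> = (\<Sum>N\<in>csupp v. v N * pi_rep h f (fock_monom N) A)"
    by (subst sum.swap) (simp add: pi_rep_fock_monom[OF f] sum_distrib_left mult_ac)
  also have "\<dots> = 0"
    using kf dv by (intro sum.neutral) (auto simp: vanishes_on_level_def homogeneous_def csupp_def)
  finally show "pi_rep h f v A = 0" .
qed

lemma level_kernel_cstar:
  assumes h: "0 < h" and f: "f \<in> level_kernel h k"
  shows "cstar f \<in> level_kernel h k"
proof -
  have fB: "f \<in> Balg" and kf: "vanishes_on_level h k f" using f by (auto simp: level_kernel_def)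
  have "pi_rep h (cstar f) (fock_monom N) A = 0" if N: "deg N = k" for N A
  proof (cases "deg A = k")
    case True
    have "fock_inner h (fock_monom A) (pi_rep h (cstar f) (fock_monom N)) = fock_inner h (pi_rep h f (fock_monom A)) (fock_monom N)"
      using fock_inner_pi_rep_adjoint[OF fin_cstar[OF Balg_fin[OF fB]] fin_fock_monom fin_fock_monom] by (simp add: cstar_cstar)
    also have "\<dots> = 0" using kf True by (simp add: vanishes_on_level_def fock_inner_zero_left)
    finally show ?thesis unfolding fock_inner_fock_monom using fock_weight_nonzero[OF h, of A] by simp
  next
    case False
    then show ?thesis
      using homogeneous_pi_rep[OF Balg_cstar[OF fB] homogeneous_fock_monom[OF N], of h] unfolding homogeneous_def by auto
  qed
  then show ?thesis using fB by (auto simp: level_kernel_def vanishes_on_level_def Balg_cstar)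
qed

lemma is_star_ideal_level_kernel:
  assumes h: "0 < h"
  shows "is_star_ideal h (level_kernel h k)"
  unfolding is_star_ideal_def
proof (intro conjI ballI allI)
  show "level_kernel h k \<subseteq> Balg" "(\<lambda>_. 0) \<in> level_kernel h k"
    by (auto simp: level_kernel_def vanishes_on_level_def Balg_zero pi_rep_zero_left)
next
  fix f g :: "'a cpoly" assume "f \<in> level_kernel h k" "g \<in> level_kernel h k"
  then show "(\<lambda>m. f m + g m) \<in> level_kernel h k"
    by (auto simp: level_kernel_def vanishes_on_level_def Balg_add pi_rep_add_left Balg_fin fin_fock_monom)
next
  fix c and f :: "'a cpoly" assume "f \<in> level_kernel h k"
  then show "(\<lambda>m. c * f m) \<in> level_kernel h k"
    by (auto simp: level_kernel_def vanishes_on_level_def Balg_scale pi_rep_scale_left Balg_fin fin_fock_monom)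
next
  fix a f :: "'a cpoly" assume a: "a \<in> Balg" and "f \<in> level_kernel h k"
  then have fB: "f \<in> Balg" and kf: "vanishes_on_level h k f" by (auto simp: level_kernel_def)
  have fa: "fin a" and ff: "fin f" using a fB by (auto simp: Balg_fin)
  have "pi_rep h (wick h a f) (fock_monom N) = (\<lambda>_. 0)" "pi_rep h (wick h f a) (fock_monom N) = (\<lambda>_. 0)"
    if N: "deg N = k" for N
    using kf N vanishes_on_level_homogeneous[OF ff kf fin_pi_rep[OF fa fin_fock_monom] homogeneous_pi_rep[OF a homogeneous_fock_monom[OF N]]]
    by (simp_all add: pi_rep_wick[OF fa ff fin_fock_monom] pi_rep_wick[OF ff fa fin_fock_monom]
        vanishes_on_level_def pi_rep_zero_right)
  then show "wick h a f \<in> level_kernel h k" "wick h f a \<in> level_kernel h k"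
    using a fB by (auto simp: level_kernel_def vanishes_on_level_def intro: Balg_wick)
next
  fix f :: "'a cpoly" assume "f \<in> level_kernel h k"
  then show "cstar f \<in> level_kernel h k" by (rule level_kernel_cstar[OF h])
qed

lemma vanishes_on_level_monom_high:
  assumes "k < deg L"
  shows "vanishes_on_level h k (monom (K, L))"
  unfolding vanishes_on_level_def
proof (intro allI impI ext)
  fix N A :: "'a \<Rightarrow> nat" assume N: "deg N = k"
  then have "\<not> L \<le> N" using deg_mono[of L N] assms by auto
  then show "pi_rep h (monom (K, L)) (fock_monom N) A = 0"
    unfolding pi_rep_fock_monom[OF fin_monom] csupp_monom by (simp add: pi_kernel_def)
qed

lemma generators_subset_level_kernel:
  "insert (J_minus (complex_of_real (h * real k))) (Pkl (Suc k) (Suc k)) \<subseteq> level_kernel h k"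
proof
  fix f assume "f \<in> insert (J_minus (complex_of_real (h * real k))) (Pkl (Suc k) (Suc k))"
  then consider "f = J_minus (complex_of_real (h * real k))" | "f \<in> Pkl (Suc k) (Suc k)" by blast
  then show "f \<in> level_kernel h k"
  proof cases
    case 1
    have "pi_rep h (J_minus (complex_of_real (h * real k))) (fock_monom N) = (\<lambda>_. 0)" if "deg N = k" for N
      using pi_rep_J_minus_homogeneous[OF fin_fock_monom homogeneous_fock_monom[OF that]] .
    then show ?thesis unfolding level_kernel_def vanishes_on_level_def 1 using J_minus_Balg by blast
  next
    case 2
    then have "fin f" and "\<And>p. p \<in> csupp f \<Longrightarrow> deg (snd p) = Suc k" by (auto simp: Pkl_def)
    then have "pi_rep h f (fock_monom N) A = 0" if "deg N = k" for N A
      unfolding pi_rep_fock_monom[OF \<open>fin f\<close>] using that deg_mono[of _ N]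
      by (intro sum.neutral) (fastforce simp: pi_kernel_def)
    then show ?thesis using Pkl_Balg[OF 2] by (auto simp: level_kernel_def vanishes_on_level_def)
  qed
qed

lemma pi_rep_Pkk_fock_monom:
  assumes g: "g \<in> Pkl k k" and N: "deg N = k"
  shows "pi_rep h g (fock_monom N) A = g (A, N) * complex_of_real (h ^ k * mfact N)"
proof -
  have fg: "fin g" and sup: "\<And>p. p \<in> csupp g \<Longrightarrow> deg (snd p) = k" using g by (auto simp: Pkl_def)
  have "pi_rep h g (fock_monom N) A = (\<Sum>p\<in>csupp g. if p = (A, N) then g p * complex_of_real (h ^ k * mfact N) else 0)"
    unfolding pi_rep_fock_monom[OF fg]
  proof (intro sum.cong refl)
    fix p assume "p \<in> csupp g"
    then have "snd p \<le> N \<longleftrightarrow> snd p = N" using le_deg_eq_imp_eq[of "snd p" N] sup N by auto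
    then show "g p * pi_kernel h (fst p) (snd p) N A = (if p = (A, N) then g p * complex_of_real (h ^ k * mfact N) else 0)"
      using N by (cases p) (auto simp: pi_kernel_def mfact_0)
  qed
  also have "\<dots> = g (A, N) * complex_of_real (h ^ k * mfact N)"
    using fg by (simp add: csupp_def)
  finally show ?thesis .
qed

lemma Pkk_vanishes_on_level_eq_0:
  assumes h: "0 < h" and g: "g \<in> Pkl k k" and kg: "vanishes_on_level h k g"
  shows "g = (\<lambda>_. 0)"
proof (rule ext, clarify)
  fix A N :: "'a \<Rightarrow> nat"
  show "g (A, N) = 0"
  proof (cases "deg N = k")
    case False
    then show ?thesis using g by (auto simp: Pkl_def csupp_def)
  next
    case True
    then have "g (A, N) * complex_of_real (h ^ k * mfact N) = 0"
      using kg pi_rep_Pkk_fock_monom[OF g True, of h A] by (simp add: vanishes_on_level_def)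
    then show ?thesis using h mfact_nonzero[of N] by simp
  qed
qed

section \<open>Reduction to degree \<open>k\<close>\<close>

inductive_set reduction_span :: "real \<Rightarrow> nat \<Rightarrow> 'i::finite cpoly set" for h k where
  zero: "(\<lambda>_. 0) \<in> reduction_span h k"
| add: "f \<in> reduction_span h k \<Longrightarrow> g \<in> reduction_span h k \<Longrightarrow> (\<lambda>m. f m + g m) \<in> reduction_span h k"
| scale: "f \<in> reduction_span h k \<Longrightarrow> (\<lambda>m. c * f m) \<in> reduction_span h k"
| wick_J_minus: "x \<in> Balg \<Longrightarrow> wick h x (J_minus (complex_of_real (h * real k))) \<in> reduction_span h k"
| monom_high: "k < deg K \<Longrightarrow> deg K = deg L \<Longrightarrow> monom (K, L) \<in> reduction_span h k"

lemma reduction_span_sum: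
  "finite I \<Longrightarrow> (\<And>i. i \<in> I \<Longrightarrow> F i \<in> reduction_span h k) \<Longrightarrow> (\<lambda>m. \<Sum>i\<in>I. F i m) \<in> reduction_span h k"
  by (induction I rule: finite_induct) (auto intro: reduction_span.zero reduction_span.add[simplified])

lemma reduction_span_minimal:
  assumes "(\<lambda>_. 0) \<in> T"
    and "\<And>f g. f \<in> T \<Longrightarrow> g \<in> T \<Longrightarrow> (\<lambda>m. f m + g m) \<in> T"
    and "\<And>c f. f \<in> T \<Longrightarrow> (\<lambda>m. c * f m) \<in> T"
    and "\<And>x. x \<in> Balg \<Longrightarrow> wick h x (J_minus (complex_of_real (h * real k))) \<in> T"
    and "\<And>K L. k < deg K \<Longrightarrow> deg K = deg L \<Longrightarrow> monom (K, L) \<in> T"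
  shows "reduction_span h k \<subseteq> T"
proof
  fix f :: "'a cpoly" assume "f \<in> reduction_span h k"
  then show "f \<in> T" by induction (use assms in auto)
qed

lemma reduction_span_subset_level_kernel: "0 < h \<Longrightarrow> reduction_span h k \<subseteq> level_kernel h k"
  using is_star_ideal_level_kernel[of h k] generators_subset_level_kernel[of h k]
  by (intro reduction_span_minimal)
    (auto simp: is_star_ideal_def level_kernel_def vanishes_on_level_monom_high monom_Balg)

text \<open>
  Modulo the reduction span, \<open>z^K zbar^L\<close> with \<open>|K| = |L| < k\<close> equals \<open>\<J> z^K zbar^L / (\<hbar>(k - |L|))\<close>,
  whose monomials have higher degree.
\<close>

lemma monom_reduction:
  assumes h: "0 < h" and d: "deg K = deg L"
  shows "\<exists>g \<in> Pkl k k. (\<lambda>x. monom (K, L) x - g x) \<in> reduction_span h k"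
  using d
proof (induction "k - deg K" arbitrary: K L)
  case 0
  show ?case
  proof (cases "deg K = k")
    case True
    then show ?thesis using 0 Pkl_monom[of K k L k] reduction_span.zero by (intro bexI[of _ "monom (K, L)"]) auto
  next
    case False
    then show ?thesis
      using 0 reduction_span.monom_high[of k K L h] Pkl_zero by (intro bexI[of _ "\<lambda>_. 0"]) auto
  qed
next
  case (Suc d)
  let ?K = "\<lambda>i l. K l + evec i l" and ?L = "\<lambda>i l. L l + evec i l"
  have "\<exists>g \<in> Pkl k k. (\<lambda>x. monom (?K i, ?L i) x - g x) \<in> reduction_span h k" for i
    using Suc by (intro Suc.hyps) (simp_all add: deg_add deg_evec)
  then obtain G where G: "\<And>i. G i \<in> Pkl k k" "\<And>i. (\<lambda>x. monom (?K i, ?L i) x - G i x) \<in> reduction_span h k"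
    by metis
  define c where "c = h * (real k - real (deg K))"
  have c: "c \<noteq> 0" using h Suc.hyps(2) unfolding c_def by simp
  have "(\<lambda>x. monom (K, L) x - complex_of_real (1 / c) * (\<Sum>i\<in>UNIV. G i x)) = (\<lambda>x. complex_of_real (1 / c) *
      ((\<Sum>i\<in>UNIV. monom (?K i, ?L i) x - G i x) + (-1) * wick h (monom (K, L)) (J_minus (complex_of_real (h * real k))) x))"
    using c Suc.prems
    by (auto simp: wick_monom_J_minus mulJ_monom c_def sum_subtractf field_simps of_real_divide fun_eq_iff)
  also have "\<dots> \<in> reduction_span h k"
    using G Suc.prems
    by (intro reduction_span.scale reduction_span.add reduction_span_sum reduction_span.wick_J_minus monom_Balg) auto
  finally show ?case
    using G(1) by (intro bexI[of _ "\<lambda>x. complex_of_real (1 / c) * (\<Sum>i\<in>UNIV. G i x)"] Pkl_scale Pkl_sum) auto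
qed

lemma level_kernel_subset_reduction_span:
  assumes h: "0 < h" and f: "f \<in> level_kernel h k"
  shows "f \<in> reduction_span h k"
proof -
  have fB: "f \<in> Balg" and ff: "fin f" and kf: "vanishes_on_level h k f"
    using f by (auto simp: level_kernel_def Balg_fin)
  have "\<exists>g \<in> Pkl k k. (\<lambda>x. monom p x - g x) \<in> reduction_span h k" if "p \<in> csupp f" for p
  proof -
    obtain K L where p: "p = (K, L)" by (cases p)
    then have "deg K = deg L" using that fB BalgD[of f K L] by (simp add: csupp_def)
    then show ?thesis unfolding p by (rule monom_reduction[OF h])
  qed
  then obtain G where G: "\<And>p. p \<in> csupp f \<Longrightarrow> G p \<in> Pkl k k"
    "\<And>p. p \<in> csupp f \<Longrightarrow> (\<lambda>x. monom p x - G p x) \<in> reduction_span h k"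
    by metis
  define g where "g = (\<lambda>x. \<Sum>p\<in>csupp f. f p * G p x)"
  have g: "g \<in> Pkl k k" unfolding g_def by (intro Pkl_sum Pkl_scale G ff)
  have "(\<lambda>x. \<Sum>p\<in>csupp f. f p * (monom p x - G p x)) = (\<lambda>x. f x - g x)"
    unfolding g_def by (subst (3) monom_expansion[OF ff]) (simp add: algebra_simps sum_subtractf)
  moreover have "(\<lambda>x. \<Sum>p\<in>csupp f. f p * (monom p x - G p x)) \<in> reduction_span h k"
    by (intro reduction_span_sum reduction_span.scale G ff)
  ultimately have fg: "(\<lambda>x. f x - g x) \<in> reduction_span h k" by simp
  have "(\<lambda>x. f x - g x) \<in> level_kernel h k"
    using fg reduction_span_subset_level_kernel[OF h] by blast
  then have "(\<lambda>x. f x + (-1) * (f x - g x)) \<in> level_kernel h k"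
    using f by (intro star_ideal_add[OF is_star_ideal_level_kernel[OF h]] star_ideal_scale[OF is_star_ideal_level_kernel[OF h]])
  then have "vanishes_on_level h k g" by (simp add: level_kernel_def)
  then have "g = (\<lambda>_. 0)" by (rule Pkk_vanishes_on_level_eq_0[OF h g])
  then show ?thesis using fg by simp
qed

section \<open>The generated \<open>*\<close>-ideal\<close>

lemma star_ideal_monom_high:
  assumes I: "is_star_ideal h I" and P: "Pkl (Suc k) (Suc k) \<subseteq> I"
  shows "deg K = Suc k + n \<Longrightarrow> deg L = deg K \<Longrightarrow> monom (K, L) \<in> I"
proof (induction n arbitrary: K L)
  case 0
  then show ?case using P Pkl_monom[of K "Suc k" L "Suc k"] by auto
next
  case (Suc n)
  obtain i where "K i \<noteq> 0" using Suc.prems deg_eq_0_iff[of K] by (auto simp: fun_eq_iff)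
  then have i: "1 \<le> K i" by simp
  obtain j where "L j \<noteq> 0" using Suc.prems deg_eq_0_iff[of L] by (auto simp: fun_eq_iff)
  then have j: "1 \<le> L j" by simp
  define K0 where "K0 = (\<lambda>l. K l - evec i l)"
  define L0 where "L0 = (\<lambda>l. L l - evec j l)"
  have dK0: "deg K0 = Suc k + n" unfolding K0_def using deg_minus_evec[of K i, OF i] Suc.prems by simp
  have dL0: "deg L0 = deg K0" unfolding L0_def using deg_minus_evec[of L j, OF j] Suc.prems dK0 by simp
  have K: "(\<lambda>l. K0 l + evec i l) = K" using minus_evec_eq_iff[of K i K0] i unfolding K0_def by simp
  have L: "(\<lambda>l. L0 l + evec j l) = L" using minus_evec_eq_iff[of L j L0] j unfolding L0_def by simp
  let ?L' = "\<lambda>l. L0 l - evec i l + evec j l"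
  have "wick h (monom (K0, L0)) (monom (evec i, evec j)) \<in> I"
    using Suc.IH[OF dK0 dL0] by (intro star_ideal_wick_right[OF I] monom_Balg) (simp add: deg_evec)
  moreover have "(\<lambda>m. complex_of_real (h * real (L0 i)) * monom (K0, ?L') m) \<in> I"
  proof (cases "1 \<le> L0 i")
    case True
    then have "deg ?L' = deg L0"
      using deg_minus_evec[of L0 i] deg_mono[OF evec_le[of L0 i]] by (simp add: deg_add deg_evec)
    then show ?thesis using Suc.IH dK0 dL0 by (intro star_ideal_scale[OF I]) simp
  next
    case False
    then have "L0 i = 0" by simp
    then show ?thesis using star_ideal_zero[OF I] by simp
  qed
  ultimately have "(\<lambda>m. wick h (monom (K0, L0)) (monom (evec i, evec j)) m
      + (-1) * (complex_of_real (h * real (L0 i)) * monom (K0, ?L') m)) \<in> I"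
    by (rule star_ideal_add[OF I _ star_ideal_scale[OF I]])
  then show ?case unfolding wick_monom_evec K L by simp
qed

lemma reduction_span_subset_star_ideal:
  assumes I: "is_star_ideal h I"
    and S: "insert (J_minus (complex_of_real (h * real k))) (Pkl (Suc k) (Suc k)) \<subseteq> I"
  shows "reduction_span h k \<subseteq> I"
proof (rule reduction_span_minimal)
  fix K L :: "'a \<Rightarrow> nat" assume KL: "k < deg K" "deg K = deg L"
  then have "deg K = Suc k + (deg K - Suc k)" by simp
  with KL S show "monom (K, L) \<in> I" by (intro star_ideal_monom_high[OF I]) auto
qed (use I S in \<open>auto intro: star_ideal_zero star_ideal_add star_ideal_scale star_ideal_wick_left\<close>)

definition level_annihilator :: "real \<Rightarrow> real \<Rightarrow> 'i::finite cpoly set" where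
  "level_annihilator h \<mu> = {f \<in> Balg. \<forall>\<omega>. level_state h \<mu> \<omega> \<longrightarrow> \<omega> f = 0}"

lemma reduction_span_subset_level_annihilator:
  assumes h: "0 < h"
  shows "reduction_span h k \<subseteq> level_annihilator h (h * real k)"
proof (rule reduction_span_minimal)
  show "(\<lambda>_. 0) \<in> level_annihilator h (h * real k)"
    by (auto simp: level_annihilator_def Balg_zero state_zero[OF level_state_is_state])
next
  fix f g :: "'a cpoly" assume "f \<in> level_annihilator h (h * real k)" "g \<in> level_annihilator h (h * real k)"
  then show "(\<lambda>m. f m + g m) \<in> level_annihilator h (h * real k)"
    by (auto simp: level_annihilator_def Balg_add state_add[OF level_state_is_state])
next
  fix c and f :: "'a cpoly" assume "f \<in> level_annihilator h (h * real k)"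
  then show "(\<lambda>m. c * f m) \<in> level_annihilator h (h * real k)"
    by (auto simp: level_annihilator_def Balg_scale state_scale[OF level_state_is_state])
next
  fix x :: "'a cpoly" assume x: "x \<in> Balg"
  then show "wick h x (J_minus (complex_of_real (h * real k))) \<in> level_annihilator h (h * real k)"
    unfolding level_annihilator_def using level_state_wick_J_minus[OF h _ x] Balg_wick[OF x J_minus_Balg] by blast
next
  fix K L :: "'a \<Rightarrow> nat" assume KL: "k < deg K" "deg K = deg L"
  then show "monom (K, L) \<in> level_annihilator h (h * real k)"
    using level_state_monom_high[OF h _ KL] monom_Balg[OF KL(2)] by (simp add: level_annihilator_def)
qed

lemma level_annihilator_eq_gen_star_ideal:
  assumes h: "0 < h"
  shows "level_annihilator h (h * real k) =
    gen_star_ideal h (insert (J_minus (complex_of_real (h * real k))) (Pkl (Suc k) (Suc k)))"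
    (is "?A = gen_star_ideal h ?S")
proof (rule antisym)
  have "?A \<subseteq> level_kernel h k"
    using vanishes_on_level_if_level_states_vanish[OF h] by (auto simp: level_annihilator_def level_kernel_def)
  also have "\<dots> \<subseteq> reduction_span h k"
    using level_kernel_subset_reduction_span[OF h] by blast
  also have "\<dots> \<subseteq> gen_star_ideal h ?S"
    unfolding gen_star_ideal_def using reduction_span_subset_star_ideal by blast
  finally show "?A \<subseteq> gen_star_ideal h ?S" .
next
  have "gen_star_ideal h ?S \<subseteq> level_kernel h k"
    unfolding gen_star_ideal_def using is_star_ideal_level_kernel[OF h] generators_subset_level_kernel by blast
  also have "\<dots> \<subseteq> reduction_span h k"
    using level_kernel_subset_reduction_span[OF h] by blast
  also have "\<dots> \<subseteq> ?A"
    by (rule reduction_span_subset_level_annihilator[OF h])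
  finally show "gen_star_ideal h ?S \<subseteq> ?A" .
qed

section \<open>The support of \<open>\<R>\<^sub>\<hbar>\<^sub>,\<^sub>\<mu>\<close>\<close>

lemma Rset_eq:
  "Rset h \<mu> = {f \<in> Balg. cstar f = f \<and> (\<forall>\<omega>. level_state h \<mu> \<omega> \<longrightarrow> Im (\<omega> f) = 0 \<and> 0 \<le> Re (\<omega> f))}"
  unfolding Rset_def level_state_def J_minus_def by blast

lemma Rset_inter_uminus_Rset:
  "f \<in> Rset h \<mu> \<inter> (\<lambda>f m. - f m) ` Rset h \<mu> \<longleftrightarrow> f \<in> level_annihilator h \<mu> \<and> cstar f = f"
proof
  assume f: "f \<in> Rset h \<mu> \<inter> (\<lambda>f m. - f m) ` Rset h \<mu>"
  then obtain g where g: "g \<in> Rset h \<mu>" "f = (\<lambda>m. - g m)" by auto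
  have "\<omega> f = 0" if r: "level_state h \<mu> \<omega>" for \<omega>
  proof -
    have "\<omega> f = - \<omega> g"
      using state_scale[OF level_state_is_state[OF r], of g "-1"] g by (simp add: Rset_eq)
    moreover have "Im (\<omega> g) = 0" "0 \<le> Re (\<omega> g)" "0 \<le> Re (\<omega> f)"
      using f g r by (auto simp: Rset_eq)
    ultimately show ?thesis by (simp add: complex_eq_iff)
  qed
  then show "f \<in> level_annihilator h \<mu> \<and> cstar f = f" using f by (auto simp: Rset_eq level_annihilator_def)
next
  assume f: "f \<in> level_annihilator h \<mu> \<and> cstar f = f"
  then have "f \<in> Rset h \<mu>" by (auto simp: Rset_eq level_annihilator_def)
  moreover have "(\<lambda>m. - f m) \<in> Rset h \<mu>"
  proof -
    have z: "\<omega> (\<lambda>m. - f m) = 0" if r: "level_state h \<mu> \<omega>" for \<omega>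
      using f r state_scale[OF level_state_is_state[OF r], of f "-1"] by (simp add: level_annihilator_def)
    have "Im (\<omega> (\<lambda>m. - f m)) = 0 \<and> 0 \<le> Re (\<omega> (\<lambda>m. - f m))" if "level_state h \<mu> \<omega>" for \<omega>
      using z[OF that] by simp
    moreover have "(\<lambda>m. - f m) \<in> Balg" "cstar (\<lambda>m. - f m) = (\<lambda>m. - f m)"
      using f Balg_scale[of f "-1"] cstar_scale[of "-1" f] by (simp_all add: level_annihilator_def)
    ultimately show ?thesis unfolding Rset_eq by blast
  qed
  ultimately show "f \<in> Rset h \<mu> \<inter> (\<lambda>f m. - f m) ` Rset h \<mu>"
    by (auto intro: image_eqI[where x = "\<lambda>m. - f m"])
qed

lemma supp_C_Rset: "supp_C (Rset h \<mu>) = level_annihilator h \<mu>"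
proof (intro equalityI subsetI)
  fix x assume "x \<in> supp_C (Rset h \<mu>)"
  then obtain a b where x: "x = (\<lambda>m. a m + \<i> * b m)"
    and ab: "a \<in> level_annihilator h \<mu>" "b \<in> level_annihilator h \<mu>"
    unfolding supp_C_def Let_def Rset_inter_uminus_Rset by blast
  have aB: "a \<in> Balg" and bB: "b \<in> Balg" using ab by (auto simp: level_annihilator_def)
  have "\<omega> x = 0" if r: "level_state h \<mu> \<omega>" for \<omega>
    using ab r state_add[OF level_state_is_state[OF r] aB Balg_scale[OF bB]]
      state_scale[OF level_state_is_state[OF r] bB] unfolding x by (auto simp: level_annihilator_def)
  then show "x \<in> level_annihilator h \<mu>"
    unfolding x using aB bB by (simp add: level_annihilator_def Balg_add Balg_scale)
next
  fix x assume x: "x \<in> level_annihilator h \<mu>"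
  then have xB: "x \<in> Balg" by (simp add: level_annihilator_def)
  have "\<omega> (re_part x) = 0 \<and> \<omega> (im_part x) = 0" if r: "level_state h \<mu> \<omega>" for \<omega>
  proof -
    have "\<omega> x = 0" using x r by (simp add: level_annihilator_def)
    moreover have "\<omega> (cstar x) = 0" using state_cstar[OF level_state_is_state[OF r] xB] \<open>\<omega> x = 0\<close> by simp
    ultimately show ?thesis
      using state_re_im_part[OF level_state_is_state[OF r] xB] by (simp add: complex_eq_iff)
  qed
  then have "re_part x \<in> level_annihilator h \<mu> \<and> cstar (re_part x) = re_part x"
    "im_part x \<in> level_annihilator h \<mu> \<and> cstar (im_part x) = im_part x"
    using xB by (simp_all add: level_annihilator_def re_part_Balg im_part_Balg cstar_re_part cstar_im_part)
  then show "x \<in> supp_C (Rset h \<mu>)"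
    unfolding supp_C_def Let_def Rset_inter_uminus_Rset using re_im_part_decomp[of x] by blast
qed

theorem proposition4p10:
  fixes n k :: nat and h :: real
  assumes "1 \<le> n" and "card (UNIV :: 'i set) = Suc n" and "0 < h"
  shows "supp_C (Rset h (h * real k) :: 'i::finite cpoly set) =
         gen_star_ideal h (insert (\<lambda>m. J_p m - complex_of_real (h * real k) * one_p m)
                                  (Pkl (Suc k) (Suc k)))"
  using level_annihilator_eq_gen_star_ideal[OF \<open>0 < h\<close>, of k]
  unfolding supp_C_Rset J_minus_def .

end
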